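(* Let $(X_n)_{n\ge0}$ be the Kendall random walk with step distribution $\nu\in\mathcal P_s$, $\nu(\{0\})=0$, let $\tau_a^+=\min\{n\ge1:X_n>a\}$, and let $t>a>0$ with $\nu(\{a\})=\nu(\{t\})=0$ and $G(t)\ne2G(a)$. Write $D=2G(a)-G(t)$ and $\Phi^a_n(t)=\mathbb P(X_{\tau_a^+}\le t,\ \tau_a^+=n)$. Then $\Phi^a_1(t)=F(t)-F(a)$, and for $n\ge2$ $$\begin{aligned}\Phi^a_n(t)={}&\Big(\frac{G(t)}2\Big)^{n-1}\Big[\frac{2G(a)H(a)(G(t)-G(a))}{D^2}-\frac{G(a)^2}{D}+\frac{(n-1)C_1H(t)}{G(t)}-\frac{G(a)H(t)}{D}\Big(C_3-\frac{C_2G(t)}{D}\Big)+II(1,a,t)\Big]\\ &+G(a)^{n-1}\Big[\frac{(nH(a)+G(a))(G(t)-G(a))}{D}-\frac{G(a)G(t)H(a)}{D^2}+\frac{G(a)H(t)C_2n}{D}\\&\qquad+\frac{G(t)H(t)}{D}\Big(\frac{C_3-C_2}2-\frac{G(a)C_2}{D}\Big)+\frac{H(t)(C_3-C_2)}2\Big],\end{aligned}$$ where $II(1,a,t)=\frac12(H(a)+H(t)+G(a)+G(t))$, $I(1,a,t)=\tfrac12G(t)+\tfrac12H(a)\Psi(\tfrac at)+\tfrac12G(a)$, $C_1=I(1,a,t)-\frac{G(a)}{D}\big[G(a)+H(a)\Psi(\frac at)(1-\frac{G(t)}{D})\big]$, $C_2=\frac{H(a)\Psi(\frac at)}{D}$,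 $C_3=\frac{H(a)\Psi(\frac at)+G(a)}{D}-\frac{2H(a)G(a)\Psi(\frac at)}{D^2}$.
   Context: Fix $\alpha>0$. $\mathcal P_s$ is the set of symmetric Borel probability measures on $\mathbb R$. For $x\in\mathbb R$, $\widetilde\delta_x=\frac12(\delta_x+\delta_{-x})$. For a probability measure $\lambda=\mathcal L(X)$ and $c>0$, $T_c\lambda=\mathcal L(cX)$, and $T_0\lambda=\delta_0$. $\widetilde\pi_{2\alpha}$ is the symmetric Pareto probability measure with density $\alpha|y|^{-2\alpha-1}\mathbf 1_{\{|y|\ge1\}}$. The Kendall convolution $\vartriangle_\alpha$ on $\mathcal P_s$ is defined by $\widetilde\delta_x\vartriangle_\alpha\widetilde\delta_y=T_M\big(\varrho^\alpha\widetilde\pi_{2\alpha}+(1-\varrho^\alpha)\widetilde\delta_1\big)$ where $M=\max(|x|,|y|)$, $m=\min(|x|,|y|)$, $\varrho=m/M$ (and $\varrho=0$ if $M=0$), extended by $(\nu_1\vartriangle_\alpha\nu_2)(A)=\int\int(\widetilde\delta_x\vartriangle_\alpha\widetilde\delta_y)(A)\,\nu_1(dx)\nu_2(dy)$. For $x\in\mathbb R$ and $\mu\in\mathcal P_s$ we write $\delta_x\vartriangle_\alpha\mu:=\widetilde\delta_x\vartriangle_\alpha\mu$. $\Psi(t)=(1-|t|^\alpha)_+$. For the measure $\nu$: $F(t)=\nu((-\infty,t])$, $G(t)=\int_{\mathbb R}\Psi(x/t)\,\nu(dx)$ for $t\neq0$, and for $t>0$, $H(t)=2F(t)-1-G(t)=t^{-\alpha}\int_{[-t,t]}|x|^\alpha\nu(dx)$.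 The Kendall random walk with step distribution $\nu$ is the Markov chain $(X_n)_{n\ge0}$ with $X_0=0$ and transition kernel $\mathbb P(X_{k+1}\in A\mid X_k=x)=(\delta_x\vartriangle_\alpha\nu)(A)$. *)

theory Defs
  imports "HOL-Probability.Probability"
begin

definition sym_pareto :: "real \<Rightarrow> real measure" where
  "sym_pareto \<alpha> = density lborel
     (\<lambda>y. ennreal (\<alpha> * \<bar>y\<bar> powr (-2*\<alpha>-1) * indicator {y. \<bar>y\<bar> \<ge> 1} y))"

definition sdelta :: "real \<Rightarrow> real set \<Rightarrow> real" where
  "sdelta x A = (indicator A x + indicator A (-x)) / 2"

text \<open>Value on the set A of the Kendall convolution of the symmetrised Diracs at x and y:
  T_M (rho^alpha pi_{2 alpha} + (1 - rho^alpha) sdelta_1), with T_0 lambda = delta_0.\<close>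
definition kendall_basic :: "real \<Rightarrow> real \<Rightarrow> real \<Rightarrow> real set \<Rightarrow> real" where
  "kendall_basic \<alpha> x y A =
     (let M = max \<bar>x\<bar> \<bar>y\<bar>; m = min \<bar>x\<bar> \<bar>y\<bar>;
          \<rho> = (if M = 0 then 0 else m / M);
          P = {z. M * z \<in> A}
      in if M = 0 then indicator A 0
         else \<rho> powr \<alpha> * measure (sym_pareto \<alpha>) P + (1 - \<rho> powr \<alpha>) * sdelta 1 P)"

text \<open>Transition kernel of the Kendall random walk: x maps to delta_x Kendall-convolved with nu.\<close>
definition kendall_kernel :: "real \<Rightarrow> real measure \<Rightarrow> real \<Rightarrow> real measure" where
  "kendall_kernel \<alpha> \<nu> x = measure_of UNIV (sets borel)
     (\<lambda>A. ennreal (\<integral>y. kendall_basic \<alpha> x y A \<partial>\<nu>))"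

text \<open>Sub-probability measure A maps to P(X_1 <= a, ..., X_k <= a, X_k in A) for the walk
  started at X_0 = 0.\<close>
fun below_meas :: "real \<Rightarrow> real measure \<Rightarrow> real \<Rightarrow> nat \<Rightarrow> real measure" where
  "below_meas \<alpha> \<nu> a 0 = return borel 0"
| "below_meas \<alpha> \<nu> a (Suc k) = measure_of UNIV (sets borel)
     (\<lambda>A. \<integral>\<^sup>+ x. emeasure (kendall_kernel \<alpha> \<nu> x) (A \<inter> {..a}) \<partial>(below_meas \<alpha> \<nu> a k))"

text \<open>Phi^a_n(t) = P(X_{tau_a^+} <= t, tau_a^+ = n), tau_a^+ = min{n >= 1 : X_n > a}.\<close>
definition Phi :: "real \<Rightarrow> real measure \<Rightarrow> real \<Rightarrow> nat \<Rightarrow> real \<Rightarrow> real" where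
  "Phi \<alpha> \<nu> a n t = (\<integral>x. measure (kendall_kernel \<alpha> \<nu> x) {a<..t} \<partial>(below_meas \<alpha> \<nu> a (n - 1)))"

definition Psi :: "real \<Rightarrow> real \<Rightarrow> real" where
  "Psi \<alpha> s = max 0 (1 - \<bar>s\<bar> powr \<alpha>)"

definition Fd :: "real measure \<Rightarrow> real \<Rightarrow> real" where
  "Fd \<nu> t = measure \<nu> {..t}"

definition Gd :: "real \<Rightarrow> real measure \<Rightarrow> real \<Rightarrow> real" where
  "Gd \<alpha> \<nu> t = (\<integral>x. Psi \<alpha> (x / t) \<partial>\<nu>)"

definition Hd :: "real \<Rightarrow> real measure \<Rightarrow> real \<Rightarrow> real" where
  "Hd \<alpha> \<nu> t = 2 * Fd \<nu> t - 1 - Gd \<alpha> \<nu> t"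

end

theory Submission
  imports Defs
begin

text \<open>
  Integration against \<open>\<delta>\<^sub>x \<triangle>\<^sub>\<alpha> \<delta>\<^sub>y\<close> is linearised by two truncated moments: the indicator of
  \<open>[-c, c]\<close> and \<open>|x/c|\<^sup>\<alpha>\<close> restricted to \<open>[-c, c]\<close>. Integrating either of them against the
  convolution gives a bilinear expression in the values of both at \<open>x\<close> and at \<open>y\<close>. Hence, for the walk
  killed when it exceeds \<open>a\<close>, the probabilities \<open>P(X\<^sub>1, \<dots>, X\<^sub>k \<le> a, |X\<^sub>k| \<le> c)\<close> and the
  corresponding \<open>\<alpha>\<close>-moments for \<open>c \<in> {a, t}\<close> obey a closed linear recurrence whose coefficients are
  \<open>G\<close> and \<open>H\<close>. Its matrix is block triangular with a Jordan block for the double eigenvalue \<open>G(a)\<close> and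
  eigenvalue \<open>G(t)/2\<close> on the other block; \<open>G(t) \<noteq> 2G(a)\<close> says exactly that these differ. By symmetry
  of the kernel, \<open>\<Phi>\<^sup>a\<^sub>n(t)\<close> is the difference of the two probabilities at time \<open>n\<close>, and solving the
  recurrence gives the formula.
\<close>

section \<open>The symmetric Pareto distribution\<close>

lemma sets_sym_pareto [simp, measurable_cong]: "sets (sym_pareto \<alpha>) = sets borel"
  by (simp add: sym_pareto_def)

lemma space_sym_pareto [simp]: "space (sym_pareto \<alpha>) = UNIV"
  by (simp add: sym_pareto_def)

lemma nn_integral_sym_pareto:
  assumes h[measurable]: "h \<in> borel_measurable borel"
  shows "(\<integral>\<^sup>+ y. h y \<partial>sym_pareto \<alpha>) =
    (\<integral>\<^sup>+ y. ennreal (\<alpha> * y powr (-2*\<alpha>-1)) * indicator {1..} y * (h y + h (-y)) \<partial>lborel)"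
proof -
  let ?q = "\<lambda>y. ennreal (\<alpha> * y powr (-2*\<alpha>-1)) * indicator {1..} y"
  have "(\<integral>\<^sup>+ y. h y \<partial>sym_pareto \<alpha>) =
      (\<integral>\<^sup>+ y. ennreal (\<alpha> * \<bar>y\<bar> powr (-2*\<alpha>-1) * indicator {y. \<bar>y\<bar> \<ge> 1} y) * h y \<partial>lborel)"
    unfolding sym_pareto_def by (rule nn_integral_density) measurable
  also have "\<dots> = (\<integral>\<^sup>+ y. ?q y * h y + ?q (-y) * h y \<partial>lborel)"
  proof (rule nn_integral_cong)
    fix y :: real
    show "ennreal (\<alpha> * \<bar>y\<bar> powr (-2*\<alpha>-1) * indicator {y. \<bar>y\<bar> \<ge> 1} y) * h y = ?q y * h y + ?q (-y) * h y"
      by (cases "y \<ge> 1"; cases "y \<le> -1") (auto simp: indicator_def)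
  qed
  also have "\<dots> = (\<integral>\<^sup>+ y. ?q y * h y \<partial>lborel) + (\<integral>\<^sup>+ y. ?q (-y) * h y \<partial>lborel)"
    by (rule nn_integral_add) auto
  also have "(\<integral>\<^sup>+ y. ?q (-y) * h y \<partial>lborel) = (\<integral>\<^sup>+ y. ?q y * h (-y) \<partial>lborel)"
    using nn_integral_real_affine[of "\<lambda>y. ?q (-y) * h y" "-1" 0] by simp
  also have "(\<integral>\<^sup>+ y. ?q y * h y \<partial>lborel) + (\<integral>\<^sup>+ y. ?q y * h (-y) \<partial>lborel)
      = (\<integral>\<^sup>+ y. ?q y * (h y + h (-y)) \<partial>lborel)"
    by (subst nn_integral_add[symmetric]) (auto simp: distrib_left)
  finally show ?thesis .
qed

lemma nn_integral_powr_atLeastAtMost: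
  assumes "1 \<le> d" and "0 < \<beta>"
  shows "(\<integral>\<^sup>+ y. ennreal (\<beta> * y powr (-\<beta>-1)) * indicator {1..d} y \<partial>lborel) = ennreal (1 - d powr (-\<beta>))"
proof -
  have "((\<lambda>y. \<beta> * y powr (-\<beta>-1)) has_integral (- (d powr (-\<beta>)) - (- ((1::real) powr (-\<beta>))))) {1..d}"
  proof (rule fundamental_theorem_of_calculus)
    fix x :: real assume "x \<in> {1..d}"
    then have "((\<lambda>y. - (y powr (-\<beta>))) has_real_derivative (- (-\<beta> * x powr (-\<beta> - 1)))) (at x)"
      by (intro DERIV_minus has_real_derivative_powr) auto
    then show "((\<lambda>y. - (y powr (-\<beta>))) has_vector_derivative \<beta> * x powr (-\<beta>-1)) (at x within {1..d})"
      by (simp add: has_real_derivative_iff_has_vector_derivative[symmetric] has_field_derivative_at_within)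
  qed fact
  then have "((\<lambda>y. if y \<in> {1..d} then \<beta> * y powr (-\<beta>-1) else 0) has_integral (1 - d powr (-\<beta>))) UNIV"
    using has_integral_restrict_UNIV[of "{1..d}" "\<lambda>y. \<beta> * y powr (-\<beta>-1)"] by simp
  then have "((\<lambda>y. \<beta> * y powr (-\<beta>-1) * indicator {1..d} y) has_integral (1 - d powr (-\<beta>))) UNIV"
    by (rule has_integral_eq[rotated]) (simp add: indicator_def)
  then have "(\<integral>\<^sup>+ y. ennreal (\<beta> * y powr (-\<beta>-1) * indicator {1..d} y) \<partial>lborel) = ennreal (1 - d powr (-\<beta>))"
    by (rule nn_integral_has_integral_lborel[rotated 2]) (use assms in auto)
  then show ?thesis
    by (simp add: indicator_mult_ennreal mult.commute)
qed

lemma nn_integral_powr_atLeast: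
  assumes "0 < \<beta>"
  shows "(\<integral>\<^sup>+ y. ennreal (\<beta> * y powr (-\<beta>-1)) * indicator {1..} y \<partial>lborel) = 1"
proof -
  have "(\<integral>\<^sup>+ y. ennreal (\<beta> * y powr (-\<beta>-1)) * indicator {1..} y \<partial>lborel) = ennreal (0 - (- ((1::real) powr (-\<beta>))))"
  proof (rule nn_integral_FTC_atLeast)
    fix x :: real assume "1 \<le> x"
    then show "((\<lambda>y. - (y powr (-\<beta>))) has_real_derivative \<beta> * x powr (-\<beta>-1)) (at x)"
      using DERIV_minus[OF has_real_derivative_powr[of x "-\<beta>"]] by simp
    show "0 \<le> \<beta> * x powr (-\<beta>-1)" using assms by simp
  next
    have "((\<lambda>y. y powr (-\<beta>)) \<longlongrightarrow> 0) at_top"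
      using assms by (intro tendsto_neg_powr filterlim_ident) auto
    then show "((\<lambda>y. - (y powr (-\<beta>))) \<longlongrightarrow> 0) at_top"
      using tendsto_minus by fastforce
  qed simp
  then show ?thesis by simp
qed

lemma prob_space_sym_pareto:
  assumes "0 < \<alpha>" shows "prob_space (sym_pareto \<alpha>)"
proof
  have "emeasure (sym_pareto \<alpha>) (space (sym_pareto \<alpha>)) =
      (\<integral>\<^sup>+ y. ennreal (\<alpha> * y powr (-2*\<alpha>-1)) * indicator {1..} y * (1 + 1) \<partial>lborel)"
    by (subst nn_integral_sym_pareto[symmetric]) simp_all
  also have "\<dots> = (\<integral>\<^sup>+ y. ennreal (2*\<alpha> * y powr (-(2*\<alpha>)-1)) * indicator {1..} y \<partial>lborel)"
  proof (intro nn_integral_cong)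
    fix y :: real
    have "ennreal (2*\<alpha> * y powr (-(2*\<alpha>)-1)) = ennreal (\<alpha> * y powr (-2*\<alpha>-1)) * ennreal 2"
      using assms by (subst ennreal_mult'[symmetric]) (auto simp: mult_ac)
    then have "ennreal (2*\<alpha> * y powr (-(2*\<alpha>)-1)) = ennreal (\<alpha> * y powr (-2*\<alpha>-1)) * (1 + 1)"
      by simp
    then show "ennreal (\<alpha> * y powr (-2*\<alpha>-1)) * indicator {1..} y * (1 + 1) =
        ennreal (2*\<alpha> * y powr (-(2*\<alpha>)-1)) * indicator {1..} y"
      by (simp add: mult_ac)
  qed
  also have "\<dots> = 1"
    using assms by (intro nn_integral_powr_atLeast) simp
  finally show "emeasure (sym_pareto \<alpha>) (space (sym_pareto \<alpha>)) = 1" .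
qed

lemma distr_uminus_sym_pareto: "distr (sym_pareto \<alpha>) borel uminus = sym_pareto \<alpha>"
proof (rule measure_eqI)
  fix A assume "A \<in> sets (distr (sym_pareto \<alpha>) borel uminus)"
  then have A[measurable]: "A \<in> sets borel" by simp
  have [measurable]: "uminus -` A \<in> sets borel"
    by (rule measurable_sets_borel[OF _ A]) simp
  have "emeasure (distr (sym_pareto \<alpha>) borel uminus) A = emeasure (sym_pareto \<alpha>) (uminus -` A)"
    by (subst emeasure_distr) auto
  also have "\<dots> = (\<integral>\<^sup>+ y. indicator (uminus -` A) y \<partial>sym_pareto \<alpha>)"
    by (rule nn_integral_indicator[symmetric]) simp
  also have "\<dots> = (\<integral>\<^sup>+ y. indicator A (- y) \<partial>sym_pareto \<alpha>)"
    by (rule nn_integral_cong) (simp add: indicator_def)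
  also have "\<dots> = (\<integral>\<^sup>+ y. indicator A y \<partial>sym_pareto \<alpha>)"
  proof -
    have "(\<lambda>y. indicator A (- y) :: ennreal) \<in> borel_measurable borel"
      "(indicator A :: real \<Rightarrow> ennreal) \<in> borel_measurable borel"
      by measurable
    then show ?thesis
      by (simp only: nn_integral_sym_pareto) (simp add: add.commute)
  qed
  finally show "emeasure (distr (sym_pareto \<alpha>) borel uminus) A = emeasure (sym_pareto \<alpha>) A"
    by simp
qed simp

lemma integral_sym_pareto_uminus:
  fixes h :: "real \<Rightarrow> real"
  assumes [measurable]: "h \<in> borel_measurable borel"
  shows "(\<integral>z. h (- z) \<partial>sym_pareto \<alpha>) = integral\<^sup>L (sym_pareto \<alpha>) h"
  by (subst (2) distr_uminus_sym_pareto[symmetric]) (simp add: integral_distr)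

text \<open>\<open>\<Psi>(x/c) = cut_ind c x - cut_pow \<alpha> c x\<close>; for symmetric \<open>\<nu>\<close> the \<open>\<nu>\<close>-integrals of the two
  functions are \<open>G(c) + H(c)\<close> and \<open>H(c)\<close>.\<close>

definition cut_ind :: "real \<Rightarrow> real \<Rightarrow> real" where
  "cut_ind c x = (if \<bar>x\<bar> \<le> c then 1 else 0)"

definition cut_pow :: "real \<Rightarrow> real \<Rightarrow> real \<Rightarrow> real" where
  "cut_pow \<alpha> c x = (if \<bar>x\<bar> \<le> c then (\<bar>x\<bar> / c) powr \<alpha> else 0)"

lemma cut_ind_measurable [measurable]: "cut_ind c \<in> borel_measurable borel"
  unfolding cut_ind_def by measurable

lemma cut_pow_measurable [measurable]: "cut_pow \<alpha> c \<in> borel_measurable borel"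
  unfolding cut_pow_def by measurable

lemma cut_ind_uminus [simp]: "cut_ind c (- x) = cut_ind c x"
  by (simp add: cut_ind_def)

lemma cut_pow_uminus [simp]: "cut_pow \<alpha> c (- x) = cut_pow \<alpha> c x"
  by (simp add: cut_pow_def)

lemma abs_cut_ind_le: "\<bar>cut_ind c x\<bar> \<le> 1"
  by (simp add: cut_ind_def)

lemma cut_pow_nonneg: "0 \<le> cut_pow \<alpha> c x"
  by (simp add: cut_pow_def)

lemma abs_cut_pow_le:
  assumes "0 \<le> \<alpha>" shows "\<bar>cut_pow \<alpha> c x\<bar> \<le> 1"
  using assms by (auto simp: cut_pow_def intro!: powr_le1 divide_le_eq_1[THEN iffD2])

lemma powr_divide_uminus:
  fixes c M :: real
  assumes "0 < c" and "0 < M"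
  shows "(c / M) powr (- \<beta>) = (M / c) powr \<beta>"
proof -
  have "(c / M) powr (- \<beta>) = c powr (- \<beta>) / M powr (- \<beta>)"
    using assms by (simp add: powr_divide)
  also have "\<dots> = M powr \<beta> / c powr \<beta>"
    by (simp add: powr_minus divide_inverse)
  also have "\<dots> = (M / c) powr \<beta>"
    using assms by (simp add: powr_divide)
  finally show ?thesis .
qed

lemma integral_sym_pareto_scaled:
  fixes g :: "real \<Rightarrow> real"
  assumes \<alpha>: "0 < \<alpha>" and M: "0 < M" and c: "0 < c" and \<beta>: "0 < \<beta>" and K: "0 \<le> K"
    and [measurable]: "g \<in> borel_measurable borel"
    and g_nonneg: "\<And>x. 0 \<le> g x" and g_even: "\<And>x. g (- x) = g x"
    and g_outside: "\<And>x. c < x \<Longrightarrow> g x = 0"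
    and g_inside: "\<And>y. 1 \<le> y \<Longrightarrow> y \<le> c / M \<Longrightarrow>
      2 * \<alpha> * y powr (-2*\<alpha>-1) * g (M * y) = K * (\<beta> * y powr (-\<beta>-1))"
  shows "(\<integral>z. g (M * z) \<partial>sym_pareto \<alpha>) = (if M \<le> c then K * (1 - (M / c) powr \<beta>) else 0)"
proof -
  have "(\<integral>\<^sup>+ z. ennreal (g (M * z)) \<partial>sym_pareto \<alpha>) = (\<integral>\<^sup>+ y. ennreal (\<alpha> * y powr (-2*\<alpha>-1)) *
      indicator {1..} y * (ennreal (g (M * y)) + ennreal (g (M * - y))) \<partial>lborel)"
    by (rule nn_integral_sym_pareto) measurable
  also have "\<dots> = (\<integral>\<^sup>+ y. ennreal K * (ennreal (\<beta> * y powr (-\<beta>-1)) * indicator {1..c/M} y) \<partial>lborel)"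
  proof (rule nn_integral_cong)
    fix y :: real
    consider "y < 1" | "1 \<le> y" "y \<le> c / M" | "1 \<le> y" "c / M < y" by linarith
    then show "ennreal (\<alpha> * y powr (-2*\<alpha>-1)) * indicator {1..} y * (ennreal (g (M * y)) + ennreal (g (M * - y))) =
        ennreal K * (ennreal (\<beta> * y powr (-\<beta>-1)) * indicator {1..c/M} y)"
    proof cases
      case 2
      have "ennreal (\<alpha> * y powr (-2*\<alpha>-1)) * (ennreal (g (M * y)) + ennreal (g (M * y))) =
          ennreal (2 * \<alpha> * y powr (-2*\<alpha>-1) * g (M * y))"
        using \<alpha> g_nonneg by (simp add: ennreal_mult'[symmetric] ennreal_plus[symmetric] mult_ac del: ennreal_plus)
      then show ?thesis
        using 2 K \<beta> g_even[of "M * y"] g_inside[OF 2] by (simp add: ennreal_mult'[symmetric])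
    next
      case 3
      then have "c < M * y"
        using M by (simp add: pos_divide_less_eq mult.commute)
      then show ?thesis
        using 3 g_outside g_even[of "M * y"] by simp
    qed simp
  qed
  also have "\<dots> = ennreal (if M \<le> c then K * (1 - (M / c) powr \<beta>) else 0)"
  proof (cases "M \<le> c")
    case True
    then have "1 \<le> c / M" using M by simp
    have "(\<integral>\<^sup>+ y. ennreal K * (ennreal (\<beta> * y powr (-\<beta>-1)) * indicator {1..c/M} y) \<partial>lborel) =
        ennreal K * (\<integral>\<^sup>+ y. ennreal (\<beta> * y powr (-\<beta>-1)) * indicator {1..c/M} y \<partial>lborel)"
      by (rule nn_integral_cmult) measurable
    also have "\<dots> = ennreal K * ennreal (1 - (M / c) powr \<beta>)"
      using \<open>1 \<le> c / M\<close> \<beta> M c by (simp add: nn_integral_powr_atLeastAtMost powr_divide_uminus)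
    finally show ?thesis
      using True K by (simp add: ennreal_mult')
  next
    case False
    then have "{1..c/M} = {}" using M by (auto simp: divide_le_eq)
    with False show ?thesis by simp
  qed
  finally have nn: "(\<integral>\<^sup>+ z. ennreal (g (M * z)) \<partial>sym_pareto \<alpha>) = \<dots>" .
  have "(M / c) powr \<beta> \<le> 1" if "M \<le> c"
    using that M c \<beta> by (intro powr_le1) auto
  then show ?thesis
    using K by (subst integral_eq_nn_integral) (auto simp: g_nonneg nn)
qed

lemma integral_sym_pareto_cut_ind:
  assumes "0 < \<alpha>" and "0 < M" and "0 < c"
  shows "(\<integral>z. cut_ind c (M * z) \<partial>sym_pareto \<alpha>) = (if M \<le> c then 1 - (M / c) powr (2 * \<alpha>) else 0)"
proof -
  have "(\<integral>z. cut_ind c (M * z) \<partial>sym_pareto \<alpha>) = (if M \<le> c then 1 * (1 - (M / c) powr (2 * \<alpha>)) else 0)"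
  proof (rule integral_sym_pareto_scaled[OF assms])
    fix y assume "1 \<le> y" "y \<le> c / M"
    then show "2 * \<alpha> * y powr (-2*\<alpha>-1) * cut_ind c (M * y) = 1 * (2 * \<alpha> * y powr (-(2*\<alpha>)-1))"
      using assms by (simp add: cut_ind_def pos_le_divide_eq abs_mult mult.commute)
  qed (use assms in \<open>auto simp: cut_ind_def\<close>)
  then show ?thesis by simp
qed

lemma integral_sym_pareto_cut_pow:
  assumes \<alpha>: "0 < \<alpha>" and M: "0 < M" and c: "0 < c"
  shows "(\<integral>z. cut_pow \<alpha> c (M * z) \<partial>sym_pareto \<alpha>) =
    (if M \<le> c then 2 * ((M / c) powr \<alpha> - (M / c) powr (2 * \<alpha>)) else 0)"
proof -
  have inside: "2 * \<alpha> * y powr (-2*\<alpha>-1) * cut_pow \<alpha> c (M * y) = 2 * (M / c) powr \<alpha> * (\<alpha> * y powr (-\<alpha>-1))"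
    if "1 \<le> y" "y \<le> c / M" for y
  proof -
    have "cut_pow \<alpha> c (M * y) = (M / c) powr \<alpha> * y powr \<alpha>"
      using that M c by (simp add: cut_pow_def abs_mult pos_le_divide_eq mult.commute powr_mult[symmetric])
    moreover have "y powr (-2*\<alpha>-1) * y powr \<alpha> = y powr (-\<alpha>-1)"
      using that by (simp add: powr_add[symmetric])
    ultimately show ?thesis by (simp add: algebra_simps)
  qed
  have "(M / c) powr (2 * \<alpha>) = (M / c) powr \<alpha> * (M / c) powr \<alpha>"
    by (metis mult_2 powr_add)
  moreover have "(\<integral>z. cut_pow \<alpha> c (M * z) \<partial>sym_pareto \<alpha>) =
      (if M \<le> c then (2 * (M / c) powr \<alpha>) * (1 - (M / c) powr \<alpha>) else 0)"
  proof (rule integral_sym_pareto_scaled[OF assms])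
  qed (use assms inside in \<open>auto simp: cut_pow_nonneg cut_pow_def\<close>)
  ultimately show ?thesis
    by (simp add: right_diff_distrib)
qed

section \<open>Kendall convolution of two points\<close>

definition kmax :: "real \<Rightarrow> real \<Rightarrow> real" where
  "kmax x y = max \<bar>x\<bar> \<bar>y\<bar>"

definition kweight :: "real \<Rightarrow> real \<Rightarrow> real \<Rightarrow> real" where
  "kweight \<alpha> x y = (min \<bar>x\<bar> \<bar>y\<bar> / kmax x y) powr \<alpha>"

definition sym_dirac :: "real \<Rightarrow> real measure" where
  "sym_dirac M = distr (measure_pmf (bernoulli_pmf (1/2))) borel (\<lambda>b. if b then M else - M)"

definition kendall_component :: "real \<Rightarrow> real \<Rightarrow> bool \<Rightarrow> real measure" where
  "kendall_component \<alpha> M b = (if b then distr (sym_pareto \<alpha>) borel (\<lambda>z. M * z) else sym_dirac M)"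

text \<open>The convolution of two symmetrised Dirac measures as a genuine measure: a coin of bias
  \<open>\<rho>\<^sup>\<alpha>\<close> chooses between \<open>T\<^sub>M \<pi>\<^sub>2\<^sub>\<alpha>\<close> and \<open>T\<^sub>M \<delta>\<^sub>1\<close>, so \<open>\<sigma>\<close>-additivity comes for free.\<close>
definition kendall_measure :: "real \<Rightarrow> real \<Rightarrow> real \<Rightarrow> real measure" where
  "kendall_measure \<alpha> x y = (if kmax x y = 0 then return borel 0
     else measure_pmf (bernoulli_pmf (kweight \<alpha> x y)) \<bind> kendall_component \<alpha> (kmax x y))"

lemma kweight_nonneg: "0 \<le> kweight \<alpha> x y"
  by (simp add: kweight_def)

lemma kweight_le_1: "0 \<le> \<alpha> \<Longrightarrow> kweight \<alpha> x y \<le> 1"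
  by (auto simp: kweight_def kmax_def intro!: powr_le1 divide_le_eq_1[THEN iffD2])

lemma prob_space_kendall_component:
  assumes "0 < \<alpha>" shows "prob_space (kendall_component \<alpha> M b)"
  unfolding kendall_component_def sym_dirac_def
  using assms by (auto intro!: prob_space.prob_space_distr prob_space_sym_pareto prob_space_measure_pmf)

lemma sets_kendall_component [simp]: "sets (kendall_component \<alpha> M b) = sets borel"
  by (simp add: kendall_component_def sym_dirac_def)

lemma measurable_kendall_component:
  "0 < \<alpha> \<Longrightarrow> kendall_component \<alpha> M \<in> measurable (measure_pmf p) (subprob_algebra borel)"
  using prob_space_kendall_component
  by (auto simp: space_subprob_algebra prob_space_imp_subprob_space)

lemma sets_kendall_measure [simp]: "sets (kendall_measure \<alpha> x y) = sets borel"
  by (simp add: kendall_measure_def)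

lemma prob_space_kendall_measure: "0 < \<alpha> \<Longrightarrow> prob_space (kendall_measure \<alpha> x y)"
  unfolding kendall_measure_def
  by (auto intro!: prob_space.prob_space_bind[where S=borel] prob_space_measure_pmf
      measurable_kendall_component prob_space_kendall_component prob_space_return)

lemma integral_kendall_measure:
  fixes g :: "real \<Rightarrow> real"
  assumes \<alpha>: "0 < \<alpha>" and [measurable]: "g \<in> borel_measurable borel" and g_bound: "\<And>z. \<bar>g z\<bar> \<le> B"
  shows "integral\<^sup>L (kendall_measure \<alpha> x y) g = (if kmax x y = 0 then g 0 else
    kweight \<alpha> x y * (\<integral>z. g (kmax x y * z) \<partial>sym_pareto \<alpha>) +
    (1 - kweight \<alpha> x y) * ((g (kmax x y) + g (- kmax x y)) / 2))"
proof (cases "kmax x y = 0")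
  case False
  let ?M = "kmax x y" and ?w = "kweight \<alpha> x y"
  have "integral\<^sup>L (kendall_measure \<alpha> x y) g =
      (\<integral>b. integral\<^sup>L (kendall_component \<alpha> ?M b) g \<partial>measure_pmf (bernoulli_pmf ?w))"
    unfolding kendall_measure_def using False
    by (simp, intro integral_bind[where K=borel and B=B and B'=1] measurable_kendall_component \<alpha> g_bound)
       (auto intro!: prob_space_measure_pmf prob_space.finite_measure
        simp: prob_space.emeasure_space_1[OF prob_space_kendall_component[OF \<alpha>]])
  also have "\<dots> = ?w * integral\<^sup>L (kendall_component \<alpha> ?M True) g +
      (1 - ?w) * integral\<^sup>L (kendall_component \<alpha> ?M False) g"
    using kweight_nonneg[of \<alpha> x y] kweight_le_1[of \<alpha> x y] \<alpha> by (simp add: mult.commute)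
  finally show ?thesis
    using False by (simp add: kendall_component_def sym_dirac_def integral_distr)
qed (simp add: kendall_measure_def integral_return)

lemma kendall_basic_eq:
  "kendall_basic \<alpha> x y A = (if kmax x y = 0 then indicator A 0 else
     kweight \<alpha> x y * measure (sym_pareto \<alpha>) {z. kmax x y * z \<in> A} +
     (1 - kweight \<alpha> x y) * ((indicator A (kmax x y) + indicator A (- kmax x y)) / 2))"
  by (simp add: kendall_basic_def Let_def sdelta_def kmax_def kweight_def indicator_def) (auto simp: max_def)

lemma measure_kendall_measure:
  assumes \<alpha>: "0 < \<alpha>" and [measurable]: "A \<in> sets borel"
  shows "measure (kendall_measure \<alpha> x y) A = kendall_basic \<alpha> x y A"
proof -
  interpret prob_space "kendall_measure \<alpha> x y"
    using \<alpha> by (rule prob_space_kendall_measure)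
  have [measurable]: "{z. kmax x y * z \<in> A} \<in> sets borel"
    by measurable
  have "(\<lambda>z. indicator A (kmax x y * z) :: real) = indicator {z. kmax x y * z \<in> A}"
    by (auto simp: indicator_def)
  then have pareto: "(\<integral>z. indicator A (kmax x y * z) \<partial>sym_pareto \<alpha>) = measure (sym_pareto \<alpha>) {z. kmax x y * z \<in> A}"
    by simp
  have "measure (kendall_measure \<alpha> x y) A = integral\<^sup>L (kendall_measure \<alpha> x y) (indicator A)"
    by simp
  also have "\<dots> = (if kmax x y = 0 then indicator A 0 else
      kweight \<alpha> x y * (\<integral>z. indicator A (kmax x y * z) \<partial>sym_pareto \<alpha>) +
      (1 - kweight \<alpha> x y) * ((indicator A (kmax x y) + indicator A (- kmax x y)) / 2))"
    by (rule integral_kendall_measure[OF \<alpha>, where B=1]) auto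
  also have "\<dots> = kendall_basic \<alpha> x y A"
    unfolding kendall_basic_eq pareto ..
  finally show ?thesis .
qed

lemma emeasure_kendall_measure:
  assumes "0 < \<alpha>" and "A \<in> sets borel"
  shows "emeasure (kendall_measure \<alpha> x y) A = ennreal (kendall_basic \<alpha> x y A)"
proof -
  interpret prob_space "kendall_measure \<alpha> x y"
    using assms(1) by (rule prob_space_kendall_measure)
  show ?thesis
    by (simp add: emeasure_eq_measure measure_kendall_measure[OF assms])
qed

lemma kendall_basic_bounds:
  assumes "0 < \<alpha>" and "A \<in> sets borel"
  shows "0 \<le> kendall_basic \<alpha> x y A" and "kendall_basic \<alpha> x y A \<le> 1"
proof -
  interpret prob_space "kendall_measure \<alpha> x y"
    using assms(1) by (rule prob_space_kendall_measure)
  show "0 \<le> kendall_basic \<alpha> x y A"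
    using measure_nonneg[of "kendall_measure \<alpha> x y" A] measure_kendall_measure[OF assms] by simp
  show "kendall_basic \<alpha> x y A \<le> 1"
    using prob_le_1[of A] measure_kendall_measure[OF assms] by simp
qed

lemma measurable_kendall_basic:
  assumes \<alpha>: "0 < \<alpha>" and [measurable]: "A \<in> sets borel"
  shows "(\<lambda>p. kendall_basic \<alpha> (fst p) (snd p) A) \<in> borel_measurable (borel \<Otimes>\<^sub>M borel)"
proof -
  interpret S: prob_space "sym_pareto \<alpha>"
    using \<alpha> by (rule prob_space_sym_pareto)
  have [measurable]: "(\<lambda>p. kmax (fst p) (snd p)) \<in> borel_measurable (borel \<Otimes>\<^sub>M borel)"
    unfolding kmax_def by measurable
  have [measurable]: "(\<lambda>p. kweight \<alpha> (fst p) (snd p)) \<in> borel_measurable (borel \<Otimes>\<^sub>M borel)"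
    unfolding kweight_def kmax_def by measurable
  have "(\<lambda>p. \<integral>\<^sup>+ z. indicator A (kmax (fst p) (snd p) * z) \<partial>sym_pareto \<alpha>) \<in> borel_measurable (borel \<Otimes>\<^sub>M borel)"
    by (rule S.borel_measurable_nn_integral) measurable
  moreover have "measure (sym_pareto \<alpha>) {z. M * z \<in> A} = enn2real (\<integral>\<^sup>+ z. indicator A (M * z) \<partial>sym_pareto \<alpha>)"
    for M :: real
  proof -
    have [measurable]: "{z. M * z \<in> A} \<in> sets borel" by measurable
    have "(\<integral>\<^sup>+ z. indicator A (M * z) \<partial>sym_pareto \<alpha>) = (\<integral>\<^sup>+ z. indicator {z. M * z \<in> A} z \<partial>sym_pareto \<alpha>)"
      by (rule nn_integral_cong) (simp add: indicator_def)
    then show ?thesis by (simp add: S.emeasure_eq_measure)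
  qed
  ultimately have [measurable]:
    "(\<lambda>p. measure (sym_pareto \<alpha>) {z. kmax (fst p) (snd p) * z \<in> A}) \<in> borel_measurable (borel \<Otimes>\<^sub>M borel)"
    by simp
  show ?thesis
    unfolding kendall_basic_eq by measurable
qed

lemma measurable_kendall_measure:
  assumes "0 < \<alpha>"
  shows "(\<lambda>p. kendall_measure \<alpha> (fst p) (snd p)) \<in> measurable (borel \<Otimes>\<^sub>M borel) (subprob_algebra borel)"
proof (rule measurable_subprob_algebra)
  fix A :: "real set" assume A: "A \<in> sets borel"
  have "(\<lambda>p. ennreal (kendall_basic \<alpha> (fst p) (snd p) A)) \<in> borel_measurable (borel \<Otimes>\<^sub>M borel)"
    using measurable_kendall_basic[OF assms A] by measurable
  then show "(\<lambda>p. emeasure (kendall_measure \<alpha> (fst p) (snd p)) A) \<in> borel_measurable (borel \<Otimes>\<^sub>M borel)"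
    by (simp add: emeasure_kendall_measure[OF assms A])
qed (auto intro: prob_space_imp_subprob_space prob_space_kendall_measure assms)

lemma kweight_scaled:
  assumes "0 < kmax x y"
  shows "kweight \<alpha> x y * (kmax x y / c) powr \<alpha> = (min \<bar>x\<bar> \<bar>y\<bar> / c) powr \<alpha>"
proof -
  have "kweight \<alpha> x y * (kmax x y / c) powr \<alpha> = (min \<bar>x\<bar> \<bar>y\<bar> / kmax x y * (kmax x y / c)) powr \<alpha>"
    unfolding kweight_def by (rule powr_mult[symmetric])
  also have "(min \<bar>x\<bar> \<bar>y\<bar>) / kmax x y * (kmax x y / c) = (min \<bar>x\<bar> \<bar>y\<bar>) / c"
    using assms by simp
  finally show ?thesis .
qed

lemma kweight_scaled_product:
  assumes "0 < kmax x y"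
  shows "kweight \<alpha> x y * (kmax x y / c) powr (2 * \<alpha>) = (\<bar>x\<bar> / c) powr \<alpha> * (\<bar>y\<bar> / c) powr \<alpha>"
proof -
  have "(kmax x y / c) powr (2 * \<alpha>) = (kmax x y / c) powr \<alpha> * (kmax x y / c) powr \<alpha>"
    by (metis mult_2 powr_add)
  then have "kweight \<alpha> x y * (kmax x y / c) powr (2 * \<alpha>) = (min \<bar>x\<bar> \<bar>y\<bar> / c) powr \<alpha> * (kmax x y / c) powr \<alpha>"
    using kweight_scaled[OF assms] by (metis mult.assoc)
  also have "\<dots> = (\<bar>x\<bar> / c) powr \<alpha> * (\<bar>y\<bar> / c) powr \<alpha>"
    by (cases "\<bar>x\<bar> \<le> \<bar>y\<bar>") (simp_all add: kmax_def min_def max_def mult.commute)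
  finally show ?thesis .
qed

lemma kweight_scaled_sum:
  assumes "0 < kmax x y"
  shows "kweight \<alpha> x y * (kmax x y / c) powr \<alpha> + (kmax x y / c) powr \<alpha> = (\<bar>x\<bar> / c) powr \<alpha> + (\<bar>y\<bar> / c) powr \<alpha>"
  unfolding kweight_scaled[OF assms]
  by (cases "\<bar>x\<bar> \<le> \<bar>y\<bar>") (simp_all add: kmax_def min_def max_def add.commute)

text \<open>The next two identities play the role that multiplicativity of characteristic functions plays
  for ordinary convolution.\<close>

lemma integral_kendall_measure_cut_ind:
  assumes \<alpha>: "0 < \<alpha>" and c: "0 < c"
  shows "integral\<^sup>L (kendall_measure \<alpha> x y) (cut_ind c) = cut_ind c x * cut_ind c y - cut_pow \<alpha> c x * cut_pow \<alpha> c y"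
proof (cases "kmax x y = 0")
  case True
  moreover have "x = 0" "y = 0"
    using True by (auto simp: kmax_def max_def split: if_splits)
  ultimately show ?thesis
    using c by (subst integral_kendall_measure[OF \<alpha>, where B=1]) (auto simp: cut_ind_def cut_pow_def)
next
  case False
  then have M: "0 < kmax x y" by (simp add: kmax_def)
  let ?M = "kmax x y" and ?w = "kweight \<alpha> x y"
  have I: "integral\<^sup>L (kendall_measure \<alpha> x y) (cut_ind c) =
      ?w * (\<integral>z. cut_ind c (?M * z) \<partial>sym_pareto \<alpha>) + (1 - ?w) * cut_ind c ?M"
    using False by (subst integral_kendall_measure[OF \<alpha>, where B=1]) (auto simp: abs_cut_ind_le)
  show ?thesis
  proof (cases "?M \<le> c")
    case True
    then have "\<bar>x\<bar> \<le> c" "\<bar>y\<bar> \<le> c" by (auto simp: kmax_def)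
    with True M c show ?thesis
      unfolding I integral_sym_pareto_cut_ind[OF \<alpha> M c]
      by (simp add: cut_ind_def cut_pow_def right_diff_distrib kweight_scaled_product)
  next
    case False
    then have "c < \<bar>x\<bar> \<or> c < \<bar>y\<bar>" by (auto simp: kmax_def)
    with False M show ?thesis
      unfolding I integral_sym_pareto_cut_ind[OF \<alpha> M c] by (auto simp: cut_ind_def cut_pow_def)
  qed
qed

lemma integral_kendall_measure_cut_pow:
  assumes \<alpha>: "0 < \<alpha>" and c: "0 < c"
  shows "integral\<^sup>L (kendall_measure \<alpha> x y) (cut_pow \<alpha> c) =
    cut_pow \<alpha> c x * cut_ind c y + cut_ind c x * cut_pow \<alpha> c y - 2 * cut_pow \<alpha> c x * cut_pow \<alpha> c y"
proof (cases "kmax x y = 0")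
  case True
  moreover have "x = 0" "y = 0"
    using True by (auto simp: kmax_def max_def split: if_splits)
  ultimately show ?thesis
    using \<alpha> c abs_cut_pow_le[of \<alpha>]
    by (subst integral_kendall_measure[OF \<alpha>, where B=1]) (auto simp: cut_ind_def cut_pow_def)
next
  case False
  then have M: "0 < kmax x y" by (simp add: kmax_def)
  let ?M = "kmax x y" and ?w = "kweight \<alpha> x y"
  have I: "integral\<^sup>L (kendall_measure \<alpha> x y) (cut_pow \<alpha> c) =
      ?w * (\<integral>z. cut_pow \<alpha> c (?M * z) \<partial>sym_pareto \<alpha>) + (1 - ?w) * cut_pow \<alpha> c ?M"
    using False \<alpha> abs_cut_pow_le[of \<alpha>] by (subst integral_kendall_measure[OF \<alpha>, where B=1]) auto
  show ?thesis
  proof (cases "?M \<le> c")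
    case True
    then have "\<bar>x\<bar> \<le> c" "\<bar>y\<bar> \<le> c" by (auto simp: kmax_def)
    moreover have "cut_pow \<alpha> c ?M = (?M / c) powr \<alpha>"
      using True M by (simp add: cut_pow_def)
    then have "integral\<^sup>L (kendall_measure \<alpha> x y) (cut_pow \<alpha> c) =
        (?w * (?M / c) powr \<alpha> + (?M / c) powr \<alpha>) - 2 * (?w * (?M / c) powr (2 * \<alpha>))"
      unfolding I integral_sym_pareto_cut_pow[OF \<alpha> M c] using True
      by (simp add: algebra_simps)
    ultimately show ?thesis
      using M c by (simp add: kweight_scaled_product kweight_scaled_sum cut_ind_def cut_pow_def)
  next
    case False
    then have "c < \<bar>x\<bar> \<or> c < \<bar>y\<bar>" by (auto simp: kmax_def)
    moreover have "cut_pow \<alpha> c ?M = 0" using False M by (simp add: cut_pow_def)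
    ultimately show ?thesis
      using False M unfolding I integral_sym_pareto_cut_pow[OF \<alpha> M c] by (auto simp: cut_ind_def cut_pow_def)
  qed
qed

lemma integral_kendall_measure_uminus:
  fixes g :: "real \<Rightarrow> real"
  assumes \<alpha>: "0 < \<alpha>" and [measurable]: "g \<in> borel_measurable borel" and g_bound: "\<And>z. \<bar>g z\<bar> \<le> B"
  shows "(\<integral>z. g (- z) \<partial>kendall_measure \<alpha> x y) = integral\<^sup>L (kendall_measure \<alpha> x y) g"
proof -
  have "(\<integral>z. g (- (kmax x y * z)) \<partial>sym_pareto \<alpha>) = (\<integral>z. g (kmax x y * z) \<partial>sym_pareto \<alpha>)"
    using integral_sym_pareto_uminus[of "\<lambda>z. g (kmax x y * z)"] by simp
  then show ?thesis
    using g_bound by (simp add: integral_kendall_measure[OF \<alpha>, where B=B] add.commute)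
qed

section \<open>The transition kernel\<close>

locale kendall_walk =
  fixes \<alpha> :: real and \<nu> :: "real measure"
  assumes alpha_pos: "0 < \<alpha>" and prob_space_step: "prob_space \<nu>" and sets_step: "sets \<nu> = sets borel"
begin

lemma measurable_step_iff [simp]: "f \<in> borel_measurable \<nu> \<longleftrightarrow> f \<in> borel_measurable borel"
  by (simp add: measurable_cong_sets[OF sets_step refl])

lemma integrable_step: "f \<in> borel_measurable borel \<Longrightarrow> (\<And>z. \<bar>f z\<bar> \<le> (B::real)) \<Longrightarrow> integrable \<nu> f"
  by (rule finite_measure.integrable_const_bound[OF prob_space.finite_measure[OF prob_space_step], where B=B])
    simp_all

lemma measurable_kendall_measure_step: "kendall_measure \<alpha> x \<in> measurable \<nu> (subprob_algebra borel)"
proof -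
  have "(\<lambda>y. (x, y)) \<in> measurable \<nu> (borel \<Otimes>\<^sub>M borel)"
    by (simp add: measurable_cong_sets[OF sets_step refl])
  from measurable_compose[OF this measurable_kendall_measure[OF alpha_pos]] show ?thesis
    by simp
qed

lemma kendall_kernel_eq_bind: "kendall_kernel \<alpha> \<nu> x = \<nu> \<bind> kendall_measure \<alpha> x"
proof -
  have emeasure_bind: "emeasure (\<nu> \<bind> kendall_measure \<alpha> x) A = ennreal (\<integral>y. kendall_basic \<alpha> x y A \<partial>\<nu>)"
    if A[measurable]: "A \<in> sets borel" for A
  proof -
    have "(\<lambda>y. (x, y)) \<in> measurable borel (borel \<Otimes>\<^sub>M borel)"
      by simp
    from measurable_compose[OF this measurable_kendall_basic[OF alpha_pos A]]
    have [measurable]: "(\<lambda>y. kendall_basic \<alpha> x y A) \<in> borel_measurable borel"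
      by simp
    have bounds: "0 \<le> kendall_basic \<alpha> x y A" "kendall_basic \<alpha> x y A \<le> 1" for y
      using kendall_basic_bounds[OF alpha_pos A] by auto
    have "emeasure (\<nu> \<bind> kendall_measure \<alpha> x) A = (\<integral>\<^sup>+ y. emeasure (kendall_measure \<alpha> x y) A \<partial>\<nu>)"
      by (rule emeasure_bind[OF _ measurable_kendall_measure_step])
        (use prob_space.not_empty[OF prob_space_step] in auto)
    also have "\<dots> = (\<integral>\<^sup>+ y. ennreal (kendall_basic \<alpha> x y A) \<partial>\<nu>)"
      by (simp add: emeasure_kendall_measure[OF alpha_pos A])
    also have "\<dots> = ennreal (\<integral>y. kendall_basic \<alpha> x y A \<partial>\<nu>)"
      using bounds by (intro nn_integral_eq_integral integrable_step[where B=1]) auto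
    finally show ?thesis .
  qed
  have sets_bind: "sets (\<nu> \<bind> kendall_measure \<alpha> x) = sets borel"
    using prob_space.not_empty[OF prob_space_step] by (subst sets_bind) auto
  have "kendall_kernel \<alpha> \<nu> x = measure_of UNIV (sets borel) (emeasure (\<nu> \<bind> kendall_measure \<alpha> x))"
    unfolding kendall_kernel_def
  proof (rule measure_of_eq)
    have "sigma_sets UNIV (sets borel) = (sets borel :: real set set)"
      by (metis sets.sigma_sets_eq space_borel)
    then show "A \<in> sigma_sets UNIV (sets borel) \<Longrightarrow>
        ennreal (\<integral>y. kendall_basic \<alpha> x y A \<partial>\<nu>) = emeasure (\<nu> \<bind> kendall_measure \<alpha> x) A" for A
      by (simp add: emeasure_bind)
  qed simp
  also have "\<dots> = \<nu> \<bind> kendall_measure \<alpha> x"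
    using measure_of_of_measure[of "\<nu> \<bind> kendall_measure \<alpha> x"] sets_eq_imp_space_eq[OF sets_bind] sets_bind
    by simp
  finally show ?thesis .
qed

lemma sets_kendall_kernel [simp, measurable_cong]: "sets (kendall_kernel \<alpha> \<nu> x) = sets borel"
  by (simp add: kendall_kernel_def) (metis sets.sigma_sets_eq space_borel)

lemma prob_space_kendall_kernel: "prob_space (kendall_kernel \<alpha> \<nu> x)"
  unfolding kendall_kernel_eq_bind
  by (rule prob_space.prob_space_bind[OF prob_space_step _ measurable_kendall_measure_step])
    (auto intro: prob_space_kendall_measure[OF alpha_pos])

lemma measurable_kendall_kernel: "kendall_kernel \<alpha> \<nu> \<in> measurable borel (subprob_algebra borel)"
proof -
  have "sets (borel \<Otimes>\<^sub>M \<nu>) = sets (borel \<Otimes>\<^sub>M borel)"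
    using sets_step by (intro sets_pair_measure_cong) auto
  then have pair: "(\<lambda>p. kendall_measure \<alpha> (fst p) (snd p)) \<in> measurable (borel \<Otimes>\<^sub>M \<nu>) (subprob_algebra borel)"
    using measurable_kendall_measure[OF alpha_pos] by (subst measurable_cong_sets) auto
  have "(\<lambda>x. \<nu>) \<in> measurable borel (subprob_algebra \<nu>)"
    using prob_space_step
    by (intro measurable_const) (auto simp: space_subprob_algebra prob_space_imp_subprob_space)
  then have "(\<lambda>x. \<nu> \<bind> kendall_measure \<alpha> x) \<in> measurable borel (subprob_algebra borel)"
    by (rule measurable_bind) (use pair in simp)
  moreover have "kendall_kernel \<alpha> \<nu> = (\<lambda>x. \<nu> \<bind> kendall_measure \<alpha> x)"
    using kendall_kernel_eq_bind by blast
  ultimately show ?thesis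
    by simp
qed

lemma integrable_kendall_kernel:
  "f \<in> borel_measurable borel \<Longrightarrow> (\<And>z. \<bar>f z\<bar> \<le> (B::real)) \<Longrightarrow> integrable (kendall_kernel \<alpha> \<nu> x) f"
  by (rule finite_measure.integrable_const_bound[OF prob_space.finite_measure[OF prob_space_kendall_kernel], where B=B])
    (auto simp: measurable_cong_sets[OF sets_kendall_kernel refl])

lemma integral_kendall_kernel:
  fixes g :: "real \<Rightarrow> real"
  assumes [measurable]: "g \<in> borel_measurable borel" and g_bound: "\<And>z. \<bar>g z\<bar> \<le> B"
  shows "integral\<^sup>L (kendall_kernel \<alpha> \<nu> x) g = (\<integral>y. integral\<^sup>L (kendall_measure \<alpha> x y) g \<partial>\<nu>)"
  unfolding kendall_kernel_eq_bind
  by (rule integral_bind[where K=borel and B=B and B'=1])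
    (auto simp: g_bound measurable_kendall_measure_step prob_space.finite_measure[OF prob_space_step]
      prob_space.emeasure_space_1[OF prob_space_kendall_measure[OF alpha_pos]])

definition cut_mass :: "real \<Rightarrow> real" where
  "cut_mass c = integral\<^sup>L \<nu> (cut_ind c)"

definition cut_moment :: "real \<Rightarrow> real" where
  "cut_moment c = integral\<^sup>L \<nu> (cut_pow \<alpha> c)"

lemma integrable_step_cut_ind: "integrable \<nu> (cut_ind c)"
  by (rule integrable_step[where B=1]) (simp_all add: abs_cut_ind_le)

lemma integrable_step_cut_pow: "integrable \<nu> (cut_pow \<alpha> c)"
  using alpha_pos by (intro integrable_step[where B=1]) (simp_all add: abs_cut_pow_le)

lemma integral_kendall_kernel_cut_ind:
  assumes "0 < c"
  shows "integral\<^sup>L (kendall_kernel \<alpha> \<nu> x) (cut_ind c) = cut_ind c x * cut_mass c - cut_pow \<alpha> c x * cut_moment c"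
proof -
  have "integral\<^sup>L (kendall_kernel \<alpha> \<nu> x) (cut_ind c) =
      (\<integral>y. cut_ind c x * cut_ind c y - cut_pow \<alpha> c x * cut_pow \<alpha> c y \<partial>\<nu>)"
    by (subst integral_kendall_kernel[where B=1])
      (simp_all add: abs_cut_ind_le integral_kendall_measure_cut_ind[OF alpha_pos assms])
  also have "\<dots> = cut_ind c x * cut_mass c - cut_pow \<alpha> c x * cut_moment c"
    by (simp add: integrable_step_cut_ind integrable_step_cut_pow cut_mass_def cut_moment_def)
  finally show ?thesis .
qed

lemma integral_kendall_kernel_cut_pow:
  assumes "0 < c"
  shows "integral\<^sup>L (kendall_kernel \<alpha> \<nu> x) (cut_pow \<alpha> c) =
    cut_pow \<alpha> c x * cut_mass c + cut_ind c x * cut_moment c - 2 * cut_pow \<alpha> c x * cut_moment c"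
proof -
  have "integral\<^sup>L (kendall_kernel \<alpha> \<nu> x) (cut_pow \<alpha> c) =
      (\<integral>y. cut_pow \<alpha> c x * cut_ind c y + cut_ind c x * cut_pow \<alpha> c y - (2 * cut_pow \<alpha> c x) * cut_pow \<alpha> c y \<partial>\<nu>)"
    using alpha_pos
    by (subst integral_kendall_kernel[where B=1])
      (simp_all add: abs_cut_pow_le integral_kendall_measure_cut_pow[OF alpha_pos assms] mult.assoc)
  also have "\<dots> = cut_pow \<alpha> c x * cut_mass c + cut_ind c x * cut_moment c - 2 * cut_pow \<alpha> c x * cut_moment c"
    by (simp add: integrable_step_cut_ind integrable_step_cut_pow cut_mass_def cut_moment_def)
  finally show ?thesis .
qed

lemma integral_kendall_kernel_even_part:
  fixes h f :: "real \<Rightarrow> real"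
  assumes [measurable]: "h \<in> borel_measurable borel" "f \<in> borel_measurable borel"
    and h_bound: "\<And>z. \<bar>h z\<bar> \<le> B" and even_part: "\<And>z. h z + h (- z) = f z"
  shows "integral\<^sup>L (kendall_kernel \<alpha> \<nu> x) h = integral\<^sup>L (kendall_kernel \<alpha> \<nu> x) f / 2"
proof -
  have "integral\<^sup>L (kendall_kernel \<alpha> \<nu> x) f = (\<integral>z. h z + h (- z) \<partial>kendall_kernel \<alpha> \<nu> x)"
    by (simp add: even_part)
  also have "\<dots> = integral\<^sup>L (kendall_kernel \<alpha> \<nu> x) h + (\<integral>z. h (- z) \<partial>kendall_kernel \<alpha> \<nu> x)"
    by (rule Bochner_Integration.integral_add) (auto intro!: integrable_kendall_kernel[where B=B] simp: h_bound)
  also have "(\<integral>z. h (- z) \<partial>kendall_kernel \<alpha> \<nu> x) = integral\<^sup>L (kendall_kernel \<alpha> \<nu> x) h"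
    using h_bound
    by (simp add: integral_kendall_kernel[where B=B] integral_kendall_measure_uminus[OF alpha_pos, where B=B])
  finally show ?thesis
    by simp
qed

lemma integral_kendall_kernel_cut_ind_below:
  assumes a: "0 < a" and "a \<le> c"
  shows "(\<integral>z. (if z \<le> a then cut_ind c z else 0) \<partial>kendall_kernel \<alpha> \<nu> x) =
    (cut_ind c x * cut_mass c - cut_pow \<alpha> c x * cut_moment c + (cut_ind a x * cut_mass a - cut_pow \<alpha> a x * cut_moment a)) / 2"
proof -
  have "(if z \<le> a then cut_ind c z else 0) + (if - z \<le> a then cut_ind c (- z) else 0) = cut_ind c z + cut_ind a z" for z
    using assms by (auto simp: cut_ind_def)
  then have "(\<integral>z. (if z \<le> a then cut_ind c z else 0) \<partial>kendall_kernel \<alpha> \<nu> x) =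
      (\<integral>z. cut_ind c z + cut_ind a z \<partial>kendall_kernel \<alpha> \<nu> x) / 2"
    by (intro integral_kendall_kernel_even_part[where B=1]) (auto simp: cut_ind_def)
  also have "(\<integral>z. cut_ind c z + cut_ind a z \<partial>kendall_kernel \<alpha> \<nu> x) =
      integral\<^sup>L (kendall_kernel \<alpha> \<nu> x) (cut_ind c) + integral\<^sup>L (kendall_kernel \<alpha> \<nu> x) (cut_ind a)"
    by (rule Bochner_Integration.integral_add) (auto intro!: integrable_kendall_kernel[where B=1] simp: abs_cut_ind_le)
  finally show ?thesis
    using assms by (simp add: integral_kendall_kernel_cut_ind)
qed

lemma integral_kendall_kernel_cut_pow_below:
  assumes a: "0 < a" and ac: "a \<le> c"
  shows "(\<integral>z. (if z \<le> a then cut_pow \<alpha> c z else 0) \<partial>kendall_kernel \<alpha> \<nu> x) =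
    ((cut_pow \<alpha> c x * cut_mass c + cut_ind c x * cut_moment c - 2 * cut_pow \<alpha> c x * cut_moment c) +
     (a / c) powr \<alpha> * (cut_pow \<alpha> a x * cut_mass a + cut_ind a x * cut_moment a - 2 * cut_pow \<alpha> a x * cut_moment a)) / 2"
proof -
  have c: "0 < c" using assms by simp
  have bound: "\<bar>cut_pow \<alpha> c z\<bar> \<le> 1" "\<bar>(a / c) powr \<alpha> * cut_pow \<alpha> a z\<bar> \<le> 1" for z
  proof -
    have "\<bar>(a / c) powr \<alpha>\<bar> \<le> 1"
      using assms alpha_pos by (auto intro!: powr_le1)
    then show "\<bar>(a / c) powr \<alpha> * cut_pow \<alpha> a z\<bar> \<le> 1"
      using abs_cut_pow_le[of \<alpha> a z] alpha_pos by (simp add: abs_mult mult_le_one)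
  qed (use alpha_pos abs_cut_pow_le in auto)
  have "(if z \<le> a then cut_pow \<alpha> c z else 0) + (if - z \<le> a then cut_pow \<alpha> c (- z) else 0) =
      cut_pow \<alpha> c z + (a / c) powr \<alpha> * cut_pow \<alpha> a z" for z
  proof (cases "\<bar>z\<bar> \<le> a")
    case True
    have "(a / c) powr \<alpha> * (\<bar>z\<bar> / a) powr \<alpha> = (a / c * (\<bar>z\<bar> / a)) powr \<alpha>"
      by (rule powr_mult[symmetric])
    also have "a / c * (\<bar>z\<bar> / a) = \<bar>z\<bar> / c" using a by simp
    finally show ?thesis using True ac by (auto simp: cut_pow_def)
  qed (use a in \<open>auto simp: cut_pow_def\<close>)
  then have "(\<integral>z. (if z \<le> a then cut_pow \<alpha> c z else 0) \<partial>kendall_kernel \<alpha> \<nu> x) =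
      (\<integral>z. cut_pow \<alpha> c z + (a / c) powr \<alpha> * cut_pow \<alpha> a z \<partial>kendall_kernel \<alpha> \<nu> x) / 2"
    using bound by (intro integral_kendall_kernel_even_part[where B=1]) auto
  also have "(\<integral>z. cut_pow \<alpha> c z + (a / c) powr \<alpha> * cut_pow \<alpha> a z \<partial>kendall_kernel \<alpha> \<nu> x) =
      integral\<^sup>L (kendall_kernel \<alpha> \<nu> x) (cut_pow \<alpha> c) + (a / c) powr \<alpha> * integral\<^sup>L (kendall_kernel \<alpha> \<nu> x) (cut_pow \<alpha> a)"
    using alpha_pos abs_cut_pow_le
    by (subst Bochner_Integration.integral_add) (auto intro!: integrable_kendall_kernel[where B=1])
  finally show ?thesis
    using a c by (simp add: integral_kendall_kernel_cut_pow)
qed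

end

section \<open>The walk killed above a level\<close>

definition return_below :: "real \<Rightarrow> real \<Rightarrow> real measure" where
  "return_below a z = (if z \<le> a then return borel z else null_measure borel)"

lemma measurable_return_below: "return_below a \<in> measurable borel (subprob_algebra borel)"
  unfolding return_below_def
  by (rule measurable_If[OF return_measurable measurable_const]) auto

lemma subprob_space_return_below: "subprob_space (return_below a z)"
  by (simp add: return_below_def subprob_space_return subprob_space_null_measure)

lemma integral_return_below:
  "g \<in> borel_measurable borel \<Longrightarrow> integral\<^sup>L (return_below a z) g = (if z \<le> a then g z else (0::real))"
  by (simp add: return_below_def integral_return)

lemma emeasure_return_below: "A \<in> sets borel \<Longrightarrow> emeasure (return_below a z) A = indicator (A \<inter> {..a}) z"
  by (simp add: return_below_def indicator_def)

context kendall_walk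
begin

definition kernel_below :: "real \<Rightarrow> real \<Rightarrow> real measure" where
  "kernel_below a x = kendall_kernel \<alpha> \<nu> x \<bind> return_below a"

lemma measurable_kernel_below:
  "sets M = sets borel \<Longrightarrow> kernel_below a \<in> measurable M (subprob_algebra borel)"
  unfolding kernel_below_def
  by (subst measurable_cong_sets[of M borel]) (auto intro: measurable_bind2 measurable_kendall_kernel measurable_return_below)

lemma subprob_space_kernel_below: "subprob_space (kernel_below a x)"
  using measurable_space[OF measurable_kernel_below[of borel a], of x] by (simp add: space_subprob_algebra)

lemma emeasure_kernel_below:
  assumes A: "A \<in> sets borel"
  shows "emeasure (kernel_below a x) A = emeasure (kendall_kernel \<alpha> \<nu> x) (A \<inter> {..a})"
proof -
  have "emeasure (kernel_below a x) A = (\<integral>\<^sup>+ z. emeasure (return_below a z) A \<partial>kendall_kernel \<alpha> \<nu> x)"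
    unfolding kernel_below_def
    by (rule emeasure_bind[OF _ _ A])
      (simp_all add: prob_space.not_empty[OF prob_space_kendall_kernel] measurable_return_below
        measurable_cong_sets[OF sets_kendall_kernel refl])
  also have "\<dots> = emeasure (kendall_kernel \<alpha> \<nu> x) (A \<inter> {..a})"
    using A by (simp add: emeasure_return_below)
  finally show ?thesis .
qed

lemma integral_kernel_below:
  fixes g :: "real \<Rightarrow> real"
  assumes [measurable]: "g \<in> borel_measurable borel" and g_bound: "\<And>z. \<bar>g z\<bar> \<le> B"
  shows "integral\<^sup>L (kernel_below a x) g = (\<integral>z. (if z \<le> a then g z else 0) \<partial>kendall_kernel \<alpha> \<nu> x)"
  unfolding kernel_below_def
  by (subst integral_bind[where K=borel and B=B and B'=1])
    (auto simp: g_bound measurable_cong_sets[OF sets_kendall_kernel refl] measurable_return_below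
      prob_space.finite_measure[OF prob_space_kendall_kernel] integral_return_below
      intro!: subprob_space.subprob_emeasure_le_1 subprob_space_return_below)

lemma below_meas_Suc_eq_bind:
  assumes sets_below: "sets (below_meas \<alpha> \<nu> a k) = sets borel"
    and subprob_below: "subprob_space (below_meas \<alpha> \<nu> a k)"
  shows "below_meas \<alpha> \<nu> a (Suc k) = below_meas \<alpha> \<nu> a k \<bind> kernel_below a"
proof -
  let ?B = "below_meas \<alpha> \<nu> a k"
  have ne: "space ?B \<noteq> {}"
    using subprob_below subprob_space.subprob_not_empty by blast
  have sets_B: "sets (?B \<bind> kernel_below a) = sets borel"
    by (rule sets_bind[OF _ ne]) (metis measurable_kernel_below sets_below subprob_measurableD(2))
  have "below_meas \<alpha> \<nu> a (Suc k) = measure_of UNIV (sets borel) (emeasure (?B \<bind> kernel_below a))"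
    unfolding below_meas.simps
  proof (rule measure_of_eq)
    fix A :: "real set" assume "A \<in> sigma_sets UNIV (sets borel)"
    then have A: "A \<in> sets borel"
      by (metis sets.sigma_sets_eq space_borel)
    have "emeasure (?B \<bind> kernel_below a) A = (\<integral>\<^sup>+ x. emeasure (kernel_below a x) A \<partial>?B)"
      by (rule emeasure_bind[OF ne measurable_kernel_below[OF sets_below] A])
    then show "(\<integral>\<^sup>+ x. emeasure (kendall_kernel \<alpha> \<nu> x) (A \<inter> {..a}) \<partial>?B) = emeasure (?B \<bind> kernel_below a) A"
      by (simp add: emeasure_kernel_below[OF A])
  qed simp
  also have "\<dots> = ?B \<bind> kernel_below a"
    using measure_of_of_measure[of "?B \<bind> kernel_below a"] sets_B sets_eq_imp_space_eq[OF sets_B] by simp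
  finally show ?thesis .
qed

lemma below_meas_sets_subprob:
  "sets (below_meas \<alpha> \<nu> a k) = sets borel \<and> subprob_space (below_meas \<alpha> \<nu> a k)"
proof (induction k)
  case (Suc k)
  then have eq: "below_meas \<alpha> \<nu> a (Suc k) = below_meas \<alpha> \<nu> a k \<bind> kernel_below a"
    by (intro below_meas_Suc_eq_bind) auto
  have ne: "space (below_meas \<alpha> \<nu> a k) \<noteq> {}"
    using Suc subprob_space.subprob_not_empty by blast
  show ?case
    unfolding eq using Suc
    by (auto intro!: sets_bind[OF _ ne] subprob_space_bind measurable_kernel_below
      dest: subprob_measurableD(2)[OF measurable_kernel_below])
qed (auto simp: subprob_space_return)

lemma integrable_below_meas:
  assumes "f \<in> borel_measurable borel" and "\<And>z. \<bar>f z\<bar> \<le> (B::real)"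
  shows "integrable (below_meas \<alpha> \<nu> a k) f"
proof -
  have sets: "sets (below_meas \<alpha> \<nu> a k) = sets borel" and subprob: "subprob_space (below_meas \<alpha> \<nu> a k)"
    using below_meas_sets_subprob by auto
  show ?thesis
    using assms
    by (intro finite_measure.integrable_const_bound[where B=B] subprob_space.axioms(1)[OF subprob])
      (auto simp: measurable_cong_sets[OF sets refl])
qed

lemma integral_below_meas_Suc:
  fixes g :: "real \<Rightarrow> real"
  assumes [measurable]: "g \<in> borel_measurable borel" and g_bound: "\<And>z. \<bar>g z\<bar> \<le> B"
  shows "integral\<^sup>L (below_meas \<alpha> \<nu> a (Suc k)) g =
    (\<integral>x. (\<integral>z. (if z \<le> a then g z else 0) \<partial>kendall_kernel \<alpha> \<nu> x) \<partial>below_meas \<alpha> \<nu> a k)"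
proof -
  have sets: "sets (below_meas \<alpha> \<nu> a k) = sets borel" and subprob: "subprob_space (below_meas \<alpha> \<nu> a k)"
    using below_meas_sets_subprob by auto
  have "integral\<^sup>L (below_meas \<alpha> \<nu> a (Suc k)) g = (\<integral>x. integral\<^sup>L (kernel_below a x) g \<partial>below_meas \<alpha> \<nu> a k)"
    unfolding below_meas_Suc_eq_bind[OF sets subprob]
    by (rule integral_bind[where K=borel and B=B and B'=1])
      (auto simp: g_bound measurable_kernel_below[OF sets] subprob_space.axioms(1)[OF subprob]
        intro!: subprob_space.subprob_emeasure_le_1 subprob_space_kernel_below)
  then show ?thesis
    by (simp add: integral_kernel_below[OF _ g_bound])
qed

definition below_ind :: "real \<Rightarrow> real \<Rightarrow> nat \<Rightarrow> real" where
  "below_ind a c k = integral\<^sup>L (below_meas \<alpha> \<nu> a k) (cut_ind c)"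

definition below_pow :: "real \<Rightarrow> real \<Rightarrow> nat \<Rightarrow> real" where
  "below_pow a c k = integral\<^sup>L (below_meas \<alpha> \<nu> a k) (cut_pow \<alpha> c)"

lemma below_ind_0: "0 \<le> c \<Longrightarrow> below_ind a c 0 = 1"
  by (simp add: below_ind_def integral_return cut_ind_def)

lemma below_pow_0: "below_pow a c 0 = 0"
  by (simp add: below_pow_def integral_return cut_pow_def)

lemma integrable_below_meas_cut_ind: "integrable (below_meas \<alpha> \<nu> a k) (cut_ind c)"
  by (rule integrable_below_meas[where B=1]) (simp_all add: abs_cut_ind_le)

lemma integrable_below_meas_cut_pow: "integrable (below_meas \<alpha> \<nu> a k) (cut_pow \<alpha> c)"
  using alpha_pos by (intro integrable_below_meas[where B=1]) (simp_all add: abs_cut_pow_le)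

lemma below_ind_Suc:
  assumes "0 < a" and "a \<le> c"
  shows "below_ind a c (Suc k) = (below_ind a c k * cut_mass c - below_pow a c k * cut_moment c +
    below_ind a a k * cut_mass a - below_pow a a k * cut_moment a) / 2"
proof -
  have "below_ind a c (Suc k) = (\<integral>x. (cut_ind c x * cut_mass c - cut_pow \<alpha> c x * cut_moment c +
      (cut_ind a x * cut_mass a - cut_pow \<alpha> a x * cut_moment a)) / 2 \<partial>below_meas \<alpha> \<nu> a k)"
    unfolding below_ind_def using assms
    by (subst integral_below_meas_Suc[where B=1])
      (simp_all add: abs_cut_ind_le integral_kendall_kernel_cut_ind_below)
  then show ?thesis
    by (simp add: below_ind_def below_pow_def integrable_below_meas_cut_ind integrable_below_meas_cut_pow)
qed

lemma below_pow_Suc: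
  assumes "0 < a" and "a \<le> c"
  shows "below_pow a c (Suc k) = (below_pow a c k * (cut_mass c - 2 * cut_moment c) + below_ind a c k * cut_moment c +
    (a / c) powr \<alpha> * (below_pow a a k * (cut_mass a - 2 * cut_moment a) + below_ind a a k * cut_moment a)) / 2"
proof -
  have "below_pow a c (Suc k) = (\<integral>x. ((cut_pow \<alpha> c x * cut_mass c + cut_ind c x * cut_moment c - 2 * cut_pow \<alpha> c x * cut_moment c) +
      (a / c) powr \<alpha> * (cut_pow \<alpha> a x * cut_mass a + cut_ind a x * cut_moment a - 2 * cut_pow \<alpha> a x * cut_moment a)) / 2
      \<partial>below_meas \<alpha> \<nu> a k)"
    unfolding below_pow_def using assms alpha_pos
    by (subst integral_below_meas_Suc[where B=1])
      (simp_all add: abs_cut_pow_le integral_kendall_kernel_cut_pow_below)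
  then show ?thesis
    by (simp add: below_ind_def below_pow_def integrable_below_meas_cut_ind integrable_below_meas_cut_pow
      algebra_simps)
qed

text \<open>By symmetry of the kernel, \<open>\<Phi>\<^sup>a\<^sub>n(t)\<close> is also the probability that the walk stays below \<open>a\<close>
  up to time \<open>n - 1\<close> and then lands in \<open>[-t, -a)\<close>.\<close>

lemma Phi_Suc_eq_below_ind:
  assumes a: "0 < a" and "a < t"
  shows "Phi \<alpha> \<nu> a (Suc k) t = below_ind a t (Suc k) - below_ind a a (Suc k)"
proof -
  have t: "0 < t" using assms by simp
  have kernel_interval: "measure (kendall_kernel \<alpha> \<nu> x) {a<..t} =
      (cut_ind t x * cut_mass t - cut_pow \<alpha> t x * cut_moment t - (cut_ind a x * cut_mass a - cut_pow \<alpha> a x * cut_moment a)) / 2" for x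
  proof -
    interpret prob_space "kendall_kernel \<alpha> \<nu> x"
      by (rule prob_space_kendall_kernel)
    have "measure (kendall_kernel \<alpha> \<nu> x) {a<..t} = integral\<^sup>L (kendall_kernel \<alpha> \<nu> x) (indicator {a<..t})"
      by simp
    also have "\<dots> = (\<integral>z. cut_ind t z - cut_ind a z \<partial>kendall_kernel \<alpha> \<nu> x) / 2"
      by (rule integral_kendall_kernel_even_part[where B=1]) (use assms in \<open>auto simp: cut_ind_def indicator_def\<close>)
    also have "\<dots> = (integral\<^sup>L (kendall_kernel \<alpha> \<nu> x) (cut_ind t) - integral\<^sup>L (kendall_kernel \<alpha> \<nu> x) (cut_ind a)) / 2"
      by (subst Bochner_Integration.integral_diff)
        (auto intro!: integrable_kendall_kernel[where B=1] simp: abs_cut_ind_le)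
    finally show ?thesis
      using a t by (simp add: integral_kendall_kernel_cut_ind)
  qed
  have "Phi \<alpha> \<nu> a (Suc k) t = (\<integral>x. (cut_ind t x * cut_mass t - cut_pow \<alpha> t x * cut_moment t -
      (cut_ind a x * cut_mass a - cut_pow \<alpha> a x * cut_moment a)) / 2 \<partial>below_meas \<alpha> \<nu> a k)"
    by (simp only: Phi_def kernel_interval diff_Suc_1)
  also have "\<dots> = below_ind a t (Suc k) - below_ind a a (Suc k)"
    unfolding below_ind_Suc[OF a order_refl] below_ind_Suc[OF a less_imp_le[OF \<open>a < t\<close>]]
    by (simp add: below_ind_def below_pow_def integrable_below_meas_cut_ind integrable_below_meas_cut_pow
      field_simps)
  finally show ?thesis .
qed

lemma Phi_eq_below_ind:
  assumes "0 < a" and "a < t" and "0 < n"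
  shows "Phi \<alpha> \<nu> a n t = below_ind a t n - below_ind a a n"
  using assms Phi_Suc_eq_below_ind[of a t "n - 1"] by simp

end

section \<open>Symmetric step distributions\<close>

lemma Psi_eq_cut:
  assumes "0 < \<alpha>" and "0 < c"
  shows "Psi \<alpha> (x / c) = cut_ind c x - cut_pow \<alpha> c x"
proof (cases "\<bar>x\<bar> \<le> c")
  case True
  then have "(\<bar>x\<bar> / c) powr \<alpha> \<le> 1"
    using assms by (auto intro!: powr_le1)
  with True assms show ?thesis
    by (simp add: Psi_def cut_ind_def cut_pow_def)
next
  case False
  then have "1 < (\<bar>x\<bar> / c) powr \<alpha>"
    using assms by (intro gr_one_powr) auto
  with False assms show ?thesis
    by (simp add: Psi_def cut_ind_def cut_pow_def)
qed

lemma powr_eq_1_minus_Psi: "0 \<le> s \<Longrightarrow> s \<le> 1 \<Longrightarrow> 0 \<le> \<alpha> \<Longrightarrow> s powr \<alpha> = 1 - Psi \<alpha> s"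
  by (simp add: Psi_def powr_le1)

context kendall_walk
begin

lemma Gd_eq_cut: "0 < c \<Longrightarrow> Gd \<alpha> \<nu> c = cut_mass c - cut_moment c"
  unfolding Gd_def cut_mass_def cut_moment_def
  by (simp add: Psi_eq_cut[OF alpha_pos] integrable_step_cut_ind integrable_step_cut_pow)

lemma Psi_measurable [measurable]: "(\<lambda>x. Psi \<alpha> (x / c)) \<in> borel_measurable borel"
  unfolding Psi_def by measurable

lemma Gd_nonneg: "0 \<le> Gd \<alpha> \<nu> c"
  unfolding Gd_def by (rule integral_nonneg_AE) (simp add: Psi_def)

lemma Gd_mono:
  assumes "0 < a" and "a \<le> t"
  shows "Gd \<alpha> \<nu> a \<le> Gd \<alpha> \<nu> t"
  unfolding Gd_def
proof (rule integral_mono)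
  have integrable: "integrable \<nu> (\<lambda>x. Psi \<alpha> (x / c))" for c
    using alpha_pos by (intro integrable_step[where B=1]) (auto simp: Psi_def)
  show "integrable \<nu> (\<lambda>x. Psi \<alpha> (x / a))" "integrable \<nu> (\<lambda>x. Psi \<alpha> (x / t))"
    by (rule integrable)+
  fix x
  have "\<bar>x / t\<bar> \<le> \<bar>x / a\<bar>"
    using assms by (simp add: abs_div frac_le)
  then have "\<bar>x / t\<bar> powr \<alpha> \<le> \<bar>x / a\<bar> powr \<alpha>"
    using alpha_pos by (intro powr_mono2) auto
  then show "Psi \<alpha> (x / a) \<le> Psi \<alpha> (x / t)"
    by (simp add: Psi_def)
qed

end

locale symmetric_kendall_walk = kendall_walk +
  assumes symmetric_step: "\<forall>A\<in>sets borel. measure \<nu> (uminus ` A) = measure \<nu> A"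
begin

lemma cut_mass_eq_Fd:
  assumes c: "0 < c"
  shows "cut_mass c = 2 * Fd \<nu> c - 1"
proof -
  interpret prob_space \<nu>
    by (rule prob_space_step)
  have [simp]: "space \<nu> = UNIV"
    using sets_eq_imp_space_eq[OF sets_step] by simp
  have [measurable]: "{..c} \<in> sets \<nu>" "{..<-c} \<in> sets \<nu>"
    using sets_step by auto
  have "cut_ind c = indicator {-c..c}"
    by (auto simp: cut_ind_def indicator_def fun_eq_iff)
  then have "cut_mass c = measure \<nu> {-c..c}"
    using sets_step by (simp add: cut_mass_def)
  also have "{-c..c} = {..c} - {..<-c}"
    by auto
  also have "measure \<nu> ({..c} - {..<-c}) = measure \<nu> {..c} - measure \<nu> {..<-c}"
    using c by (intro finite_measure_Diff) auto
  also have "measure \<nu> {..<-c} = measure \<nu> {c<..}"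
  proof -
    have "uminus ` {c<..} = {..<-c}"
      by (auto simp: image_iff intro!: exI[where x="- _"])
    then show ?thesis
      using symmetric_step by (metis borel_open open_greaterThan)
  qed
  also have "measure \<nu> {c<..} = 1 - measure \<nu> {..c}"
  proof -
    have "{c<..} = space \<nu> - {..c}"
      by auto
    then show ?thesis
      using prob_compl[of "{..c}"] by simp
  qed
  finally show ?thesis
    by (simp add: Fd_def)
qed

lemma cut_moment_eq_Hd: "0 < c \<Longrightarrow> cut_moment c = Hd \<alpha> \<nu> c"
  by (simp add: Hd_def Gd_eq_cut cut_mass_eq_Fd)

lemma cut_mass_eq_Gd_Hd: "0 < c \<Longrightarrow> cut_mass c = Gd \<alpha> \<nu> c + Hd \<alpha> \<nu> c"
  by (simp add: Gd_eq_cut cut_moment_eq_Hd[symmetric])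

lemma below_moments_Suc:
  assumes a: "0 < a" and at: "a < t"
  defines "G \<equiv> Gd \<alpha> \<nu>" and "H \<equiv> Hd \<alpha> \<nu>"
  shows "below_ind a a (Suc k) = (G a + H a) * below_ind a a k - H a * below_pow a a k"
    and "below_pow a a (Suc k) = (G a - H a) * below_pow a a k + H a * below_ind a a k"
    and "below_ind a t (Suc k) =
      ((G t + H t) * below_ind a t k - H t * below_pow a t k + (G a + H a) * below_ind a a k - H a * below_pow a a k) / 2"
    and "below_pow a t (Suc k) = ((G t - H t) * below_pow a t k + H t * below_ind a t k +
      (1 - Psi \<alpha> (a / t)) * ((G a - H a) * below_pow a a k + H a * below_ind a a k)) / 2"
  using assms alpha_pos
  by (simp_all add: below_ind_Suc below_pow_Suc cut_mass_eq_Gd_Hd cut_moment_eq_Hd powr_eq_1_minus_Psi field_simps)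

lemma Phi_1:
  assumes "0 < a" and "a < t"
  shows "Phi \<alpha> \<nu> a 1 t = Fd \<nu> t - Fd \<nu> a"
  using assms Phi_eq_below_ind[of a t 1]
  by (simp add: below_ind_Suc below_ind_0 below_pow_0 cut_mass_eq_Fd field_simps)

end

section \<open>Solving the recurrence\<close>

lemma Suc_mult_power_pred: "real (Suc k) * (x::real) ^ (Suc k - 1) = x ^ k + x * (real k * x ^ (k - 1))"
  by (cases k) (auto simp: algebra_simps)

lemma jordan_recurrence_closed_form:
  fixes p h :: real and A0 A1 :: "nat \<Rightarrow> real"
  assumes "A0 0 = 1" and "A1 0 = 0"
    and A0_Suc: "\<And>k. A0 (Suc k) = (p + h) * A0 k - h * A1 k"
    and A1_Suc: "\<And>k. A1 (Suc k) = (p - h) * A1 k + h * A0 k"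
  shows "A0 k = p ^ k + h * (real k * p ^ (k - 1)) \<and> A1 k = h * (real k * p ^ (k - 1))"
proof (induction k)
  case (Suc k)
  then show ?case
    unfolding A0_Suc A1_Suc Suc_mult_power_pred by (simp add: algebra_simps)
qed (simp add: assms)

text \<open>The hypotheses on \<open>\<gamma>, \<beta>, \<gamma>', \<beta>'\<close> are exactly what makes the ansatz invariant under the
  recurrence; they are solvable when the eigenvalues \<open>p\<close> and \<open>q\<close> differ.\<close>

lemma forced_recurrence_closed_form:
  fixes p q Ha Ht psi \<gamma> \<beta> \<gamma>' \<beta>' :: real and A0 A1 T0 T1 :: "nat \<Rightarrow> real"
  assumes \<gamma>: "\<gamma> * (2*p - 2*q) = psi*Ha*p"
    and \<beta>: "\<beta> * (2*p - 2*q) = p + psi*Ha - 2*\<gamma>"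
    and \<gamma>': "\<gamma>' * (2*p - 2*q) = Ht*\<gamma> + Ha*p"
    and \<beta>': "\<beta>' * (2*p - 2*q) = Ht*\<beta> + p + Ha - 2*\<gamma>'"
    and A0: "\<And>k. A0 k = p ^ k + Ha * (real k * p ^ (k - 1))"
    and A1: "\<And>k. A1 k = Ha * (real k * p ^ (k - 1))"
    and "T0 0 = 1" and "T1 0 = 0"
    and T0_Suc: "\<And>k. T0 (Suc k) = ((2*q + Ht) * T0 k - Ht * T1 k + ((p + Ha) * A0 k - Ha * A1 k)) / 2"
    and T1_Suc: "\<And>k. T1 (Suc k) = ((2*q - Ht) * T1 k + Ht * T0 k + (1 - psi) * ((p - Ha) * A1 k + Ha * A0 k)) / 2"
  shows "T0 k - T1 k = (1 - \<beta>) * q^k + \<beta> * p^k + \<gamma> * (real k * p^(k-1)) \<and>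
    T0 k = (1 - \<beta>') * q^k + (Ht * (1 - \<beta>) / 2) * (real k * q^(k-1)) + \<beta>' * p^k + \<gamma>' * (real k * p^(k-1))"
proof (induction k)
  case 0
  then show ?case using assms by simp
next
  case (Suc k)
  define P where "P = p^k"
  define Qp where "Qp = real k * p^(k-1)"
  define R where "R = q^k"
  define Qq where "Qq = real k * q^(k-1)"
  define D where "D = 2*p - 2*q"
  have IH: "T0 k - T1 k = (1 - \<beta>)*R + \<beta>*P + \<gamma>*Qp"
    "T0 k = (1 - \<beta>')*R + (Ht*(1-\<beta>)/2)*Qq + \<beta>'*P + \<gamma>'*Qp"
    using Suc.IH by (simp_all add: P_def Qp_def R_def Qq_def)
  then have T1: "T1 k = T0 k - ((1 - \<beta>)*R + \<beta>*P + \<gamma>*Qp)"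
    by simp
  have A: "A0 k = P + Ha*Qp" "A1 k = Ha*Qp"
    by (simp_all add: A0 A1 P_def Qp_def)
  have powers: "p^Suc k = p*P" "real (Suc k)*p^(Suc k - 1) = P + p*Qp"
      "q^Suc k = q*R" "real (Suc k)*q^(Suc k - 1) = R + q*Qq"
    unfolding P_def Qp_def R_def Qq_def Suc_mult_power_pred by simp_all
  have "(T0 (Suc k) - T1 (Suc k)) - ((1 - \<beta>)*(q*R) + \<beta>*(p*P) + \<gamma>*(P + p*Qp))
      = - (P*(\<beta>*D - (p + psi*Ha - 2*\<gamma>))/2 + Qp*(\<gamma>*D - psi*Ha*p)/2)"
    unfolding T0_Suc T1_Suc T1 A IH(2) by (simp add: D_def field_simps)
  also have "\<dots> = 0"
    using \<gamma> \<beta> by (simp add: D_def)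
  finally have diff: "T0 (Suc k) - T1 (Suc k) = (1 - \<beta>)*q^Suc k + \<beta>*p^Suc k + \<gamma>*(real (Suc k)*p^(Suc k - 1))"
    unfolding powers by simp
  have "T0 (Suc k) - ((1 - \<beta>')*(q*R) + (Ht*(1-\<beta>)/2)*(R + q*Qq) + \<beta>'*(p*P) + \<gamma>'*(P + p*Qp))
      = - (P*(\<beta>'*D - (Ht*\<beta> + p + Ha - 2*\<gamma>'))/2 + Qp*(\<gamma>'*D - (Ht*\<gamma> + Ha*p))/2)"
    unfolding T0_Suc T1 A IH(2) by (simp add: D_def field_simps)
  also have "\<dots> = 0"
    using \<gamma>' \<beta>' by (simp add: D_def)
  finally have "T0 (Suc k) = (1 - \<beta>')*q^Suc k + (Ht*(1-\<beta>)/2)*(real (Suc k)*q^(Suc k - 1)) +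
      \<beta>'*p^Suc k + \<gamma>'*(real (Suc k)*p^(Suc k - 1))"
    unfolding powers by simp
  with diff show ?case
    by simp
qed

lemma closed_form_coefficients:
  fixes Ga Gt Ha Ht psi x \<gamma> \<beta> \<gamma>' \<beta>' :: real
  assumes D0: "2*Ga - Gt \<noteq> 0" and Gt0: "Gt \<noteq> 0"
    and \<gamma>: "\<gamma> * (2*Ga - Gt) = psi*Ha*Ga"
    and \<beta>: "\<beta> * (2*Ga - Gt) = Ga + psi*Ha - 2*\<gamma>"
    and \<gamma>': "\<gamma>' * (2*Ga - Gt) = Ht*\<gamma> + Ha*Ga"
    and \<beta>': "\<beta>' * (2*Ga - Gt) = Ht*\<beta> + Ga + Ha - 2*\<gamma>'"
  defines "D \<equiv> 2*Ga - Gt"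
  defines "II \<equiv> (Ha + Ht + Ga + Gt) / 2"
  defines "I \<equiv> Gt / 2 + Ha * psi / 2 + Ga / 2"
  defines "C1 \<equiv> I - Ga / D * (Ga + Ha * psi * (1 - Gt / D))"
  defines "C2 \<equiv> Ha * psi / D"
  defines "C3 \<equiv> (Ha * psi + Ga) / D - 2 * Ha * Ga * psi / D^2"
  shows "(1 - \<beta>')*(Gt/2) + (Ht*(1-\<beta>)/2)*x =
      2*Ga*Ha*(Gt-Ga)/D^2 - Ga^2/D + (x - 1)*C1*Ht/Gt - Ga*Ht/D*(C3 - C2*Gt/D) + II"
    and "(\<beta>' - 1)*Ga + (\<gamma>' - Ha)*x =
      (x*Ha + Ga)*(Gt-Ga)/D - Ga*Gt*Ha/D^2 + Ga*Ht*C2*x/D + Gt*Ht/D*((C3-C2)/2 - Ga*C2/D) + Ht*(C3-C2)/2"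
proof -
  define E where "E = inverse D"
  define F where "F = inverse Gt"
  have E: "E * (2*Ga - Gt) = 1" using D0 by (simp add: E_def D_def)
  have F: "F * Gt = 1" using Gt0 by (simp add: F_def)
  have divide: "\<And>y. y / D = y * E" "\<And>y. y / D^2 = y * E^2" "\<And>y. y / Gt = y * F"
    by (simp_all add: E_def F_def divide_inverse power_inverse)
  have "\<gamma> = psi*Ha*Ga*E" using \<gamma> E by algebra
  moreover have "\<beta> = (Ga + psi*Ha - 2*\<gamma>)*E" using \<beta> E by algebra
  moreover have "\<gamma>' = (Ht*\<gamma> + Ha*Ga)*E" using \<gamma>' E by algebra
  moreover have "\<beta>' = (Ht*\<beta> + Ga + Ha - 2*\<gamma>')*E" using \<beta>' E by algebra
  ultimately show "(1 - \<beta>')*(Gt/2) + (Ht*(1-\<beta>)/2)*x =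
      2*Ga*Ha*(Gt-Ga)/D^2 - Ga^2/D + (x - 1)*C1*Ht/Gt - Ga*Ht/D*(C3 - C2*Gt/D) + II"
    and "(\<beta>' - 1)*Ga + (\<gamma>' - Ha)*x =
      (x*Ha + Ga)*(Gt-Ga)/D - Ga*Gt*Ha/D^2 + Ga*Ht*C2*x/D + Gt*Ht/D*((C3-C2)/2 - Ga*C2/D) + Ht*(C3-C2)/2"
    unfolding II_def C1_def C2_def C3_def I_def divide using E F by algebra+
qed

lemma kendall_recurrence_solution:
  fixes Ga Gt Ha Ht psi :: real and A0 A1 T0 T1 \<Phi> :: "nat \<Rightarrow> real"
  assumes D0: "Gt \<noteq> 2 * Ga" and Gt0: "Gt \<noteq> 0"
    and "A0 0 = 1" and "A1 0 = 0" and "T0 0 = 1" and "T1 0 = 0"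
    and A0_Suc: "\<And>k. A0 (Suc k) = (Ga + Ha) * A0 k - Ha * A1 k"
    and A1_Suc: "\<And>k. A1 (Suc k) = (Ga - Ha) * A1 k + Ha * A0 k"
    and T0_Suc: "\<And>k. T0 (Suc k) = ((Gt + Ht) * T0 k - Ht * T1 k + (Ga + Ha) * A0 k - Ha * A1 k) / 2"
    and T1_Suc: "\<And>k. T1 (Suc k) = ((Gt - Ht) * T1 k + Ht * T0 k + (1 - psi) * ((Ga - Ha) * A1 k + Ha * A0 k)) / 2"
    and \<Phi>_eq: "\<And>n. 0 < n \<Longrightarrow> \<Phi> n = T0 n - A0 n"
  shows "let D = 2 * Ga - Gt; II = (Ha + Ht + Ga + Gt) / 2; I = Gt / 2 + Ha * psi / 2 + Ga / 2;
      C1 = I - Ga / D * (Ga + Ha * psi * (1 - Gt / D)); C2 = Ha * psi / D;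
      C3 = (Ha * psi + Ga) / D - 2 * Ha * Ga * psi / D^2
    in \<forall>n. 2 \<le> n \<longrightarrow> \<Phi> n =
      (Gt / 2) ^ (n - 1) *
        (2 * Ga * Ha * (Gt - Ga) / D^2 - Ga ^ 2 / D + real (n - 1) * C1 * Ht / Gt
         - Ga * Ht / D * (C3 - C2 * Gt / D) + II)
      + Ga ^ (n - 1) *
        ((real n * Ha + Ga) * (Gt - Ga) / D - Ga * Gt * Ha / D^2 + Ga * Ht * C2 * real n / D
         + Gt * Ht / D * ((C3 - C2) / 2 - Ga * C2 / D) + Ht * (C3 - C2) / 2)"
proof -
  have D: "2 * Ga - Gt \<noteq> 0" using D0 by simp
  define \<gamma> where "\<gamma> = psi * Ha * Ga / (2 * Ga - Gt)"
  define \<beta> where "\<beta> = (Ga + psi * Ha - 2 * \<gamma>) / (2 * Ga - Gt)"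
  define \<gamma>' where "\<gamma>' = (Ht * \<gamma> + Ha * Ga) / (2 * Ga - Gt)"
  define \<beta>' where "\<beta>' = (Ht * \<beta> + Ga + Ha - 2 * \<gamma>') / (2 * Ga - Gt)"
  have coefficients: "\<gamma> * (2*Ga - Gt) = psi*Ha*Ga" "\<beta> * (2*Ga - Gt) = Ga + psi*Ha - 2*\<gamma>"
    "\<gamma>' * (2*Ga - Gt) = Ht*\<gamma> + Ha*Ga" "\<beta>' * (2*Ga - Gt) = Ht*\<beta> + Ga + Ha - 2*\<gamma>'"
    using D by (simp_all add: \<gamma>_def \<beta>_def \<gamma>'_def \<beta>'_def)
  have A: "A0 k = Ga ^ k + Ha * (real k * Ga ^ (k - 1))" "A1 k = Ha * (real k * Ga ^ (k - 1))" for k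
    using jordan_recurrence_closed_form[of A0 A1 Ga Ha k] assms by simp_all
  have T0: "T0 k = (1 - \<beta>') * (Gt/2)^k + (Ht * (1 - \<beta>) / 2) * (real k * (Gt/2)^(k-1)) +
      \<beta>' * Ga^k + \<gamma>' * (real k * Ga^(k-1))" for k
    using forced_recurrence_closed_form[of \<gamma> Ga "Gt/2" psi Ha \<beta> \<gamma>' Ht \<beta>' A0 A1 T0 T1 k] coefficients A assms
    by simp
  have \<Phi>_closed: "\<Phi> n = (Gt/2)^(n-1) * ((1 - \<beta>')*(Gt/2) + (Ht*(1-\<beta>)/2)*real n) +
      Ga^(n-1) * ((\<beta>' - 1)*Ga + (\<gamma>' - Ha)*real n)" if "0 < n" for n
  proof -
    obtain m where n: "n = Suc m"
      using \<open>0 < n\<close> gr0_implies_Suc by blast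
    define Q where "Q = (Gt/2)^m"
    define P where "P = Ga^m"
    have T0_n: "T0 n = (1 - \<beta>')*(Gt/2*Q) + (Ht*(1-\<beta>)/2)*(real n*Q) + \<beta>'*(Ga*P) + \<gamma>'*(real n*P)"
      unfolding T0 n power_Suc diff_Suc_1 Q_def[symmetric] P_def[symmetric] by (simp only:)
    have A0_n: "A0 n = Ga*P + Ha*(real n*P)"
      unfolding A n power_Suc diff_Suc_1 P_def[symmetric] by (simp only:)
    show ?thesis
      unfolding \<Phi>_eq[OF \<open>0 < n\<close>] T0_n A0_n unfolding n diff_Suc_1 Q_def[symmetric] P_def[symmetric]
      by (simp add: algebra_simps)
  qed
  show ?thesis
    unfolding Let_def
    apply (intro allI impI)
    subgoal for n
      using \<Phi>_closed[of n] closed_form_coefficients[OF D Gt0 coefficients, of "real n"] of_nat_diff[of 1 n]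
      by simp
    done
qed

theorem mainTheorem13:
  fixes \<alpha> a t :: real and \<nu> :: "real measure"
  assumes "\<alpha> > 0"
    and "prob_space \<nu>" and "sets \<nu> = sets borel"
    and "\<forall>A\<in>sets borel. measure \<nu> (uminus ` A) = measure \<nu> A"
    and "measure \<nu> {0} = 0"
    and "0 < a" and "a < t"
    and "measure \<nu> {a} = 0" and "measure \<nu> {t} = 0"
    and "Gd \<alpha> \<nu> t \<noteq> 2 * Gd \<alpha> \<nu> a"
  shows "let G = Gd \<alpha> \<nu>; H = Hd \<alpha> \<nu>; D = 2 * G a - G t;
             psi = Psi \<alpha> (a / t);
             II = (H a + H t + G a + G t) / 2;
             I = G t / 2 + H a * psi / 2 + G a / 2;
             C1 = I - G a / D * (G a + H a * psi * (1 - G t / D));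
             C2 = H a * psi / D;
             C3 = (H a * psi + G a) / D - 2 * H a * G a * psi / D^2
         in Phi \<alpha> \<nu> a 1 t = Fd \<nu> t - Fd \<nu> a
          \<and> (\<forall>n::nat. n \<ge> 2 \<longrightarrow>
               Phi \<alpha> \<nu> a n t =
                 (G t / 2) ^ (n - 1) *
                   (2 * G a * H a * (G t - G a) / D^2 - G a ^ 2 / D
                    + real (n - 1) * C1 * H t / G t
                    - G a * H t / D * (C3 - C2 * G t / D) + II)
               + G a ^ (n - 1) *
                   ((real n * H a + G a) * (G t - G a) / D
                    - G a * G t * H a / D^2
                    + G a * H t * C2 * real n / D
                    + G t * H t / D * ((C3 - C2) / 2 - G a * C2 / D)
                    + H t * (C3 - C2) / 2))"
proof -
  interpret symmetric_kendall_walk \<alpha> \<nu>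
    using assms(1-4)
    by (simp add: symmetric_kendall_walk_def symmetric_kendall_walk_axioms_def kendall_walk_def)
  have a: "0 < a" and at: "a < t"
    using assms by auto
  have "Gd \<alpha> \<nu> t \<noteq> 0"
    using Gd_nonneg[of a] Gd_mono[OF a less_imp_le[OF at]] assms(10) by linarith
  from kendall_recurrence_solution[OF assms(10) this below_ind_0 below_pow_0 below_ind_0 below_pow_0
      below_moments_Suc[OF a at] Phi_eq_below_ind[OF a at]] a at
  show ?thesis
    unfolding Let_def using Phi_1[OF a at] by simp
qed

end
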